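(* Consider the discrete-time Markov system with unknown parameter $W$: $p(x_k\mid x_{0:k-1},w)=T_k(x_k,x_{k-1},w)$ and $p(y_k\mid x_{0:k},\mathcal{Y}_{1:k-1},w)=p_{\mathcal{N}}(y_k\mid\Phi_k(x_k,w),\Gamma)$ with $y_k\in\mathbb{R}^r$, and initial prior $P_0$ on $\mathcal{X}\times\mathcal{W}$ absolutely continuous w.r.t. Lebesgue measure. Let $Q_1,\dots,Q_k$ be approximate posteriors with Lebesgue densities $q_i$, with ELBO $\mathcal{L}_i(Q_i)\ge\epsilon_i$ for all $i\in[1,k]$. Assume $P_i\in\bar{\mathcal{P}}_{i+1}(\mathcal{X}\times\mathcal{W})$ for $i\in[0,k-1]$, $Q_i\in\bar{\mathcal{P}}_{i+1}(\mathcal{X}\times\mathcal{W})$ for $i\in[1,k-1]$, and $Q_i\ll$ Lebesgue for $i\in[1,k]$. Set $s_i=\sqrt{-\frac r2\log(2\pi)-\frac12\log\det\Gamma-\epsilon_i}$. Then for $d\in\{d_{TV},d_H\}$, $$d(P_k,Q_k)\le\sum_{j=1}^{k-1}C_{VI,j}\,s_j+\alpha s_k\qquad\text{and}\qquad d(P_k,Q_k)\le\sum_{j=1}^{k-1}C'_{VI,j}\,s_j+\alpha s_k,$$ where, with $p_{j,k}=p(\mathcal{Y}_{j+1:k}\mid\mathcal{Y}_{1:j})$ and $z_{j,k}=\prod_{i=j+1}^kZ_i(Q_{i-1})$: - $d_{TV}$: $C_{VI,j}=\frac{(2\pi)^{-r(k-j)/2}\det(\Gamma)^{-(k-j)/2}}{\sqrt2\,p_{j,k}}$,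 $C'_{VI,j}=\frac{(2\pi)^{-r(k-j)/2}\det(\Gamma)^{-(k-j)/2}}{\sqrt2\,z_{j,k}}$, $\alpha=\frac1{\sqrt2}$; - $d_H$: $C_{VI,j}=\frac{2^{k-j}(2\pi)^{-r(k-j)/4}\det(\Gamma)^{-(k-j)/4}}{\sqrt{2p_{j,k}}}$, $C'_{VI,j}=\frac{2^{k-j}(2\pi)^{-r(k-j)/4}\det(\Gamma)^{-(k-j)/4}}{\sqrt2\prod_{i=j+1}^k\sqrt{Z_i(Q_{i-1})}}$, $\alpha=\frac1{\sqrt2}$. If moreover $\sup_{(x,w),(x',w')}d_{\mathcal{X}\times\mathcal{W}}((x,w),(x',w'))=D<\infty$, both inequalities also hold for $d=W_1$ with $C_{VI,j}=\frac{D(2\pi)^{-r(k-j)/2}\det(\Gamma)^{-(k-j)/2}}{\sqrt2\,p_{j,k}}$, $C'_{VI,j}=\frac{D(2\pi)^{-r(k-j)/2}\det(\Gamma)^{-(k-j)/2}}{\sqrt2\,z_{j,k}}$, $\alpha=\frac D{\sqrt2}$.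
   Context: $(\mathcal{X}\times\mathcal{W},d_{\mathcal{X}\times\mathcal{W}})$ is a Polish metric space; $\lambda$ is Lebesgue measure on it; $T_k(x_k,x_{k-1},w)$ is a measurable transition density in $x_k$; $p_{\mathcal{N}}(z\mid m,\Gamma)$ is the Gaussian density with mean $m$ and covariance $\Gamma$ (positive definite); $\Phi_k$ is measurable. With $h_i(y_i,x,w)=p_{\mathcal{N}}(y_i\mid\Phi_i(x,w),\Gamma)$: for $\mu\ll\lambda$ with density $\pi$, $\tilde F_i\mu(dx,dw)=h_i(y_i,x,w)(\int T_i(x,x',w)\pi(x',w)dx')dxdw$, evidence $Z_i(\mu)=\tilde F_i\mu(\mathcal{X}\times\mathcal{W})$, posterior $F_i\mu=\tilde F_i\mu/Z_i(\mu)$; exact posteriors $P_i=F_i(P_{i-1})$. Admissible priors $\bar{\mathcal{P}}_i(\mathcal{X}\times\mathcal{W})$: $\mu\ll\lambda$, $\int T_i(x_i,x',w)\pi(x',w)dx'<\infty$ for all $x_i,w$, $0<Z_i(\mu)<\infty$. ELBO: with $q_0$ the density of $P_0$ and $q_i^{*-}(x_i,w)=\int T_i(x_i,x_{i-1},w)q_{i-1}(x_{i-1},w)dx_{i-1}$, $\mathcal{L}_i(Q_i)=\mathbb{E}_{q_i}[\log(p_{\mathcal{N}}(y_i\mid\Phi_i(x_i,w),\Gamma)q_i^{*-}(x_i,w))]-\mathbb{E}_{q_i}[\log q_i(x_i,w)]$. $p(\mathcal{Y}_{j+1:k}\mid\mathcal{Y}_{1:j})=\prod_{i=j+1}^kZ_i(P_{i-1})$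 is the conditional data density. $d_{TV}$, $d_H$, $W_1$ are total variation, Hellinger ($d_H^2=\frac12\int(\sqrt{d\mu/d\nu}-\sqrt{d\mu'/d\nu})^2d\nu$) and 1-Wasserstein distances. *)

theory Defs
  imports "HOL-Probability.Probability"
begin

definition pos_def_mat :: "real^'r^'r \<Rightarrow> bool" where
  "pos_def_mat G \<longleftrightarrow> transpose G = G \<and> (\<forall>v. v \<noteq> 0 \<longrightarrow> v \<bullet> (G *v v) > 0)"

definition gauss_dens :: "real^'r \<Rightarrow> real^'r \<Rightarrow> real^'r^'r \<Rightarrow> real" where
  "gauss_dens z m G =
     (2 * pi) powr (- real CARD('r) / 2) * det G powr (- 1 / 2)
     * exp (- (1 / 2) * ((z - m) \<bullet> (matrix_inv G *v (z - m))))"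

definition lik :: "(nat \<Rightarrow> 'x \<Rightarrow> 'w \<Rightarrow> real^'r) \<Rightarrow> real^'r^'r \<Rightarrow> (nat \<Rightarrow> real^'r)
    \<Rightarrow> nat \<Rightarrow> 'x \<times> 'w \<Rightarrow> real" where
  "lik \<Phi> G y i z = gauss_dens (y i) (\<Phi> i (fst z) (snd z)) G"

definition pred :: "(nat \<Rightarrow> 'x::euclidean_space \<Rightarrow> 'x \<Rightarrow> 'w \<Rightarrow> real) \<Rightarrow> nat
    \<Rightarrow> ('x \<times> 'w \<Rightarrow> real) \<Rightarrow> 'x \<times> 'w \<Rightarrow> ennreal" where
  "pred T i \<pi> z = (\<integral>\<^sup>+ x'. ennreal (T i (fst z) x' (snd z) * \<pi> (x', snd z)) \<partial>lborel)"

definition evid :: "(nat \<Rightarrow> 'x::euclidean_space \<Rightarrow> 'x \<Rightarrow> 'w::euclidean_space \<Rightarrow> real)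
    \<Rightarrow> (nat \<Rightarrow> 'x \<Rightarrow> 'w \<Rightarrow> real^'r) \<Rightarrow> real^'r^'r \<Rightarrow> (nat \<Rightarrow> real^'r)
    \<Rightarrow> nat \<Rightarrow> ('x \<times> 'w \<Rightarrow> real) \<Rightarrow> ennreal" where
  "evid T \<Phi> G y i \<pi> = (\<integral>\<^sup>+ z. ennreal (lik \<Phi> G y i z) * pred T i \<pi> z \<partial>lborel)"

definition post_op :: "(nat \<Rightarrow> 'x::euclidean_space \<Rightarrow> 'x \<Rightarrow> 'w::euclidean_space \<Rightarrow> real)
    \<Rightarrow> (nat \<Rightarrow> 'x \<Rightarrow> 'w \<Rightarrow> real^'r) \<Rightarrow> real^'r^'r \<Rightarrow> (nat \<Rightarrow> real^'r)
    \<Rightarrow> nat \<Rightarrow> ('x \<times> 'w \<Rightarrow> real) \<Rightarrow> 'x \<times> 'w \<Rightarrow> real" where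
  "post_op T \<Phi> G y i \<pi> z =
     lik \<Phi> G y i z * enn2real (pred T i \<pi> z) / enn2real (evid T \<Phi> G y i \<pi>)"

fun exact_post :: "(nat \<Rightarrow> 'x::euclidean_space \<Rightarrow> 'x \<Rightarrow> 'w::euclidean_space \<Rightarrow> real)
    \<Rightarrow> (nat \<Rightarrow> 'x \<Rightarrow> 'w \<Rightarrow> real^'r) \<Rightarrow> real^'r^'r \<Rightarrow> (nat \<Rightarrow> real^'r)
    \<Rightarrow> ('x \<times> 'w \<Rightarrow> real) \<Rightarrow> nat \<Rightarrow> 'x \<times> 'w \<Rightarrow> real" where
  "exact_post T \<Phi> G y p0 0 = p0"
| "exact_post T \<Phi> G y p0 (Suc i) = post_op T \<Phi> G y (Suc i) (exact_post T \<Phi> G y p0 i)"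

definition prob_dens :: "('a::euclidean_space \<Rightarrow> real) \<Rightarrow> bool" where
  "prob_dens \<pi> \<longleftrightarrow> \<pi> \<in> borel_measurable borel \<and> (\<forall>z. 0 \<le> \<pi> z)
      \<and> (\<integral>\<^sup>+ z. ennreal (\<pi> z) \<partial>lborel) = 1"

definition admissible :: "(nat \<Rightarrow> 'x::euclidean_space \<Rightarrow> 'x \<Rightarrow> 'w::euclidean_space \<Rightarrow> real)
    \<Rightarrow> (nat \<Rightarrow> 'x \<Rightarrow> 'w \<Rightarrow> real^'r) \<Rightarrow> real^'r^'r \<Rightarrow> (nat \<Rightarrow> real^'r)
    \<Rightarrow> nat \<Rightarrow> ('x \<times> 'w \<Rightarrow> real) \<Rightarrow> bool" where
  "admissible T \<Phi> G y i \<pi> \<longleftrightarrow> prob_dens \<pi>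
      \<and> (\<forall>x w. pred T i \<pi> (x, w) < \<infinity>)
      \<and> 0 < evid T \<Phi> G y i \<pi> \<and> evid T \<Phi> G y i \<pi> < \<infinity>"

text \<open>ELBO bound \<open>L_i(Q_i) \<ge> \<epsilon>\<close>, where \<open>q\<close> is the sequence of densities with
  \<open>q 0\<close> the density of \<open>P_0\<close>. The ELBO is required to be well defined: on
  \<open>{q_i > 0}\<close> the argument \<open>h_i q_i^{*-}\<close> of the log is positive and finite (a.e.),
  and both expectations are finite.\<close>
definition elbo_ge :: "(nat \<Rightarrow> 'x::euclidean_space \<Rightarrow> 'x \<Rightarrow> 'w::euclidean_space \<Rightarrow> real)
    \<Rightarrow> (nat \<Rightarrow> 'x \<Rightarrow> 'w \<Rightarrow> real^'r) \<Rightarrow> real^'r^'r \<Rightarrow> (nat \<Rightarrow> real^'r)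
    \<Rightarrow> (nat \<Rightarrow> 'x \<times> 'w \<Rightarrow> real) \<Rightarrow> nat \<Rightarrow> real \<Rightarrow> bool" where
  "elbo_ge T \<Phi> G y q i \<epsilon> \<longleftrightarrow>
     (AE z in lborel. 0 < q i z \<longrightarrow> 0 < pred T i (q (i - 1)) z \<and> pred T i (q (i - 1)) z < \<infinity>)
   \<and> integrable lborel (\<lambda>z. q i z * ln (lik \<Phi> G y i z * enn2real (pred T i (q (i - 1)) z)))
   \<and> integrable lborel (\<lambda>z. q i z * ln (q i z))
   \<and> \<epsilon> \<le> (\<integral> z. q i z * ln (lik \<Phi> G y i z * enn2real (pred T i (q (i - 1)) z)) \<partial>lborel)
          - (\<integral> z. q i z * ln (q i z) \<partial>lborel)"

definition dTV :: "'a measure \<Rightarrow> 'a measure \<Rightarrow> real" where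
  "dTV M N = (SUP A \<in> sets M. \<bar>measure M A - measure N A\<bar>)"

definition dH :: "('a::euclidean_space \<Rightarrow> real) \<Rightarrow> ('a \<Rightarrow> real) \<Rightarrow> real" where
  "dH p q = sqrt (1 / 2 * (\<integral> z. (sqrt (p z) - sqrt (q z))\<^sup>2 \<partial>lborel))"

definition couplings :: "'a::topological_space measure \<Rightarrow> 'a measure \<Rightarrow> ('a \<times> 'a) measure set" where
  "couplings M N = {\<gamma>. prob_space \<gamma> \<and> sets \<gamma> = sets (borel \<Otimes>\<^sub>M borel)
      \<and> distr \<gamma> borel fst = M \<and> distr \<gamma> borel snd = N}"

definition W1 :: "('a::topological_space \<Rightarrow> 'a \<Rightarrow> real) \<Rightarrow> 'a measure \<Rightarrow> 'a measure \<Rightarrow> ennreal" where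
  "W1 d M N = (INF \<gamma> \<in> couplings M N. \<integral>\<^sup>+ p. ennreal (d (fst p) (snd p)) \<partial>\<gamma>)"

definition polish_metric :: "('a::topological_space \<Rightarrow> 'a \<Rightarrow> real) \<Rightarrow> bool" where
  "polish_metric d \<longleftrightarrow>
     (\<forall>a b. 0 \<le> d a b) \<and> (\<forall>a b. d a b = 0 \<longleftrightarrow> a = b) \<and> (\<forall>a b. d a b = d b a)
   \<and> (\<forall>a b c. d a c \<le> d a b + d b c)
   \<and> (\<forall>U. open U \<longleftrightarrow> (\<forall>a\<in>U. \<exists>e>0. \<forall>b. d a b < e \<longrightarrow> b \<in> U))
   \<and> (\<forall>s::nat \<Rightarrow> 'a. (\<forall>e>0. \<exists>N. \<forall>m\<ge>N. \<forall>n\<ge>N. d (s m) (s n) < e)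
          \<longrightarrow> (\<exists>l. \<forall>e>0. \<exists>N. \<forall>n\<ge>N. d (s n) l < e))"

end

theory Submission
  imports Defs
begin

(* The error is propagated one filtering step at a time: by the triangle inequality
   d(P_i, Q_i) <= d(F_i P_(i-1), F_i Q_(i-1)) + d(F_i Q_(i-1), Q_i).
   The prediction step integrates against a Markov kernel and therefore contracts both d_TV and
   d_H; the Bayes update with a likelihood bounded by H = (2 pi)^(-r/2) det(Gamma)^(-1/2)
   expands them by at most H/Z and 2 sqrt(H/Z), where Z is the evidence of either prior.
   The second term is controlled by the ELBO: L_i(Q_i) = log Z_i(Q_(i-1)) - KL(Q_i || F_i Q_(i-1))
   and Z_i <= H, so the KL divergence is at most log H - eps_i = s_i^2, and Pinsker's inequality
   and d_H^2 <= KL/2 turn this into s_i / sqrt 2. Unrolling the recursion yields the sums.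
   For W_1, a maximal coupling of the two densities gives W_1 <= D d_TV. *)

section \<open>Probability densities and total variation\<close>

lemma prob_dens_iff_integral:
  "prob_dens p \<longleftrightarrow> p \<in> borel_measurable lborel \<and> (\<forall>z. 0 \<le> p z)
      \<and> integrable lborel p \<and> integral\<^sup>L lborel p = 1"
proof
  assume p: "prob_dens p"
  then have m: "p \<in> borel_measurable borel" and nn: "\<forall>z. 0 \<le> p z"
    and one: "(\<integral>\<^sup>+ z. ennreal (p z) \<partial>lborel) = 1"
    by (auto simp: prob_dens_def)
  have "integrable lborel p" using m nn one by (intro integrableI_nonneg) auto
  moreover have "integral\<^sup>L lborel p = 1" using m nn one by (subst integral_eq_nn_integral) auto
  ultimately show "p \<in> borel_measurable lborel \<and> (\<forall>z. 0 \<le> p z) \<and> integrable lborel p \<and> integral\<^sup>L lborel p = 1"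
    using m nn by simp
next
  assume "p \<in> borel_measurable lborel \<and> (\<forall>z. 0 \<le> p z) \<and> integrable lborel p \<and> integral\<^sup>L lborel p = 1"
  then show "prob_dens p"
    unfolding prob_dens_def by (auto simp: nn_integral_eq_integral)
qed

lemma prob_densD:
  assumes "prob_dens p"
  shows "p \<in> borel_measurable lborel" "0 \<le> p z" "integrable lborel p" "integral\<^sup>L lborel p = 1"
  using assms by (auto simp: prob_dens_iff_integral)

lemma emeasure_density_eq_integral:
  fixes f :: "'a::euclidean_space \<Rightarrow> real"
  assumes [measurable]: "f \<in> borel_measurable lborel" and A: "A \<in> sets lborel"
    and f0: "\<And>z. 0 \<le> f z" and fi: "integrable lborel f"
  shows "emeasure (density lborel (\<lambda>z. ennreal (f z))) A = ennreal (\<integral> z. indicator A z * f z \<partial>lborel)"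
proof -
  have [measurable]: "A \<in> sets borel" using A by simp
  have "emeasure (density lborel (\<lambda>z. ennreal (f z))) A = (\<integral>\<^sup>+ z. ennreal (indicator A z * f z) \<partial>lborel)"
    by (subst emeasure_density) (auto intro!: nn_integral_cong simp: indicator_def)
  also have "\<dots> = ennreal (\<integral> z. indicator A z * f z \<partial>lborel)"
    using integrable_mult_indicator[OF A fi] f0 by (intro nn_integral_eq_integral) auto
  finally show ?thesis .
qed

lemma integral_indicator_mult_bounds:
  fixes f :: "'a::euclidean_space \<Rightarrow> real"
  assumes f0: "\<And>z. 0 \<le> f z" and fi: "integrable lborel f" and A: "A \<in> sets lborel"
  shows "0 \<le> (\<integral> z. indicator A z * f z \<partial>lborel)" "(\<integral> z. indicator A z * f z \<partial>lborel) \<le> (\<integral> z. f z \<partial>lborel)"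
proof -
  show "0 \<le> (\<integral> z. indicator A z * f z \<partial>lborel)" using f0 by (intro integral_nonneg_AE) auto
  show "(\<integral> z. indicator A z * f z \<partial>lborel) \<le> (\<integral> z. f z \<partial>lborel)"
    using integrable_mult_indicator[OF A fi] fi f0 by (intro integral_mono) (auto simp: indicator_def)
qed

lemma measure_density_eq_integral:
  assumes p: "prob_dens p" and A: "A \<in> sets lborel"
  shows "measure (density lborel (\<lambda>z. ennreal (p z))) A = (\<integral> z. indicator A z * p z \<partial>lborel)"
proof -
  note d = prob_densD[OF p]
  show ?thesis
    using emeasure_density_eq_integral[OF d(1) A d(2) d(3)] integral_indicator_mult_bounds(1)[OF d(2) d(3) A]
    unfolding measure_def by simp
qed

text \<open>For probability densities \<open>tv_dens p q = \<integral> (p - q)\<^sup>+ = \<integral> \<bar>p - q\<bar> / 2\<close>.\<close>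

definition tv_dens :: "('a::euclidean_space \<Rightarrow> real) \<Rightarrow> ('a \<Rightarrow> real) \<Rightarrow> real" where
  "tv_dens p q = (\<integral> z. max (p z - q z) 0 \<partial>lborel)"

lemma integrable_max_diff:
  fixes p q :: "'a::euclidean_space \<Rightarrow> real"
  assumes "integrable lborel p" "integrable lborel q"
  shows "integrable lborel (\<lambda>z. max (p z - q z) 0)"
  using assms by (intro integrable_max) auto

lemma tv_dens_nonneg: "0 \<le> tv_dens p q"
  unfolding tv_dens_def by (intro integral_nonneg_AE) auto

lemma tv_dens_self: "tv_dens p p = 0"
  unfolding tv_dens_def by simp

lemma tv_dens_sym:
  assumes "prob_dens p" "prob_dens q"
  shows "tv_dens p q = tv_dens q p"
proof -
  have ip: "integrable lborel p" and iq: "integrable lborel q" using assms by (auto dest: prob_densD)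
  have "(\<lambda>z. max (p z - q z) 0) = (\<lambda>z. max (q z - p z) 0 + (p z - q z))" by (auto simp: fun_eq_iff)
  then have "tv_dens p q = tv_dens q p + ((\<integral> z. p z \<partial>lborel) - (\<integral> z. q z \<partial>lborel))"
    unfolding tv_dens_def using ip iq integrable_max_diff[OF iq ip] by simp
  then show ?thesis using assms by (simp add: prob_densD)
qed

lemma tv_dens_triangle:
  fixes p q r :: "'a::euclidean_space \<Rightarrow> real"
  assumes "integrable lborel p" "integrable lborel q" "integrable lborel r"
  shows "tv_dens p r \<le> tv_dens p q + tv_dens q r"
proof -
  have "tv_dens p r \<le> (\<integral> z. max (p z - q z) 0 + max (q z - r z) 0 \<partial>lborel)"
    unfolding tv_dens_def using assms by (intro integral_mono integrable_max_diff Bochner_Integration.integrable_add) auto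
  also have "\<dots> = tv_dens p q + tv_dens q r"
    unfolding tv_dens_def using assms by (intro Bochner_Integration.integral_add integrable_max_diff) auto
  finally show ?thesis .
qed

lemma tv_dens_eq_integral_diff:
  fixes p q :: "'a::euclidean_space \<Rightarrow> real"
  assumes [measurable]: "p \<in> borel_measurable lborel" "q \<in> borel_measurable lborel"
    and ip: "integrable lborel p" and iq: "integrable lborel q"
  shows "tv_dens p q = (\<integral> z. indicator {z. q z < p z} z * p z \<partial>lborel) - (\<integral> z. indicator {z. q z < p z} z * q z \<partial>lborel)"
proof -
  have A: "{z. q z < p z} \<in> sets lborel" by measurable
  have "tv_dens p q = (\<integral> z. indicator {z. q z < p z} z * p z - indicator {z. q z < p z} z * q z \<partial>lborel)"
    unfolding tv_dens_def by (intro Bochner_Integration.integral_cong) (auto simp: indicator_def)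
  then show ?thesis
    using integrable_mult_indicator[OF A ip] integrable_mult_indicator[OF A iq] by simp
qed

lemma dTV_density_le_tv_dens:
  assumes p: "prob_dens p" and q: "prob_dens q"
  shows "dTV (density lborel (\<lambda>z. ennreal (p z))) (density lborel (\<lambda>z. ennreal (q z))) \<le> tv_dens p q"
  unfolding dTV_def
proof (rule cSUP_least)
  show "sets (density lborel (\<lambda>z. ennreal (p z))) \<noteq> {}" by auto
next
  fix A assume "A \<in> sets (density lborel (\<lambda>z. ennreal (p z)))"
  then have A: "A \<in> sets lborel" by simp
  have ip: "integrable lborel p" and iq: "integrable lborel q" using p q by (auto dest: prob_densD)
  have ipA: "integrable lborel (\<lambda>z. indicator A z * p z)" and iqA: "integrable lborel (\<lambda>z. indicator A z * q z)"
    using integrable_mult_indicator[OF A ip] integrable_mult_indicator[OF A iq] by auto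
  have "(\<integral> z. indicator A z * p z - indicator A z * q z \<partial>lborel) \<le> tv_dens p q"
    and "(\<integral> z. indicator A z * q z - indicator A z * p z \<partial>lborel) \<le> tv_dens q p"
    unfolding tv_dens_def using ipA iqA integrable_max_diff[OF ip iq] integrable_max_diff[OF iq ip]
    by (intro integral_mono Bochner_Integration.integrable_diff; auto simp: indicator_def)+
  then show "\<bar>measure (density lborel (\<lambda>z. ennreal (p z))) A - measure (density lborel (\<lambda>z. ennreal (q z))) A\<bar> \<le> tv_dens p q"
    using ipA iqA tv_dens_sym[OF p q] by (simp add: measure_density_eq_integral[OF _ A] p q)
qed

section \<open>Square-integrable functions and the Hellinger distance\<close>

definition square_integrable :: "'a measure \<Rightarrow> ('a \<Rightarrow> real) \<Rightarrow> bool" where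
  "square_integrable M f \<longleftrightarrow> f \<in> borel_measurable M \<and> integrable M (\<lambda>z. (f z)\<^sup>2)"

definition norm_L2 :: "'a measure \<Rightarrow> ('a \<Rightarrow> real) \<Rightarrow> real" where
  "norm_L2 M f = sqrt (\<integral> z. (f z)\<^sup>2 \<partial>M)"

lemma le_sqrt_mult_if_quadratic_nonneg:
  fixes A B c :: real
  assumes A: "0 \<le> A" and B: "0 \<le> B" and quad: "\<And>t. 0 \<le> t\<^sup>2 * A - 2 * t * c + B"
  shows "c \<le> sqrt A * sqrt B"
proof (cases "A = 0")
  case True
  show ?thesis
  proof (rule ccontr)
    assume "\<not> ?thesis"
    then have c: "c > 0" using True by simp
    have "0 \<le> ((B + 1) / (2 * c))\<^sup>2 * A - 2 * ((B + 1) / (2 * c)) * c + B" by (rule quad)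
    also have "\<dots> = -1" using True c by (simp add: field_simps)
    finally show False by simp
  qed
next
  case False
  then have Ap: "A > 0" using A by simp
  have "0 \<le> (c / A)\<^sup>2 * A - 2 * (c / A) * c + B" by (rule quad)
  also have "\<dots> = B - c\<^sup>2 / A" using Ap by (simp add: field_simps power2_eq_square)
  finally have "c\<^sup>2 \<le> A * B" using Ap by (simp add: field_simps)
  then have "\<bar>c\<bar> \<le> sqrt (A * B)" using real_sqrt_le_mono[of "c\<^sup>2" "A * B"] by simp
  then show ?thesis by (simp add: real_sqrt_mult)
qed

lemma square_integrable_mult_integrable:
  assumes f: "square_integrable M f" and g: "square_integrable M g"
  shows "integrable M (\<lambda>z. f z * g z)"
proof (rule Bochner_Integration.integrable_bound)
  show "integrable M (\<lambda>z. (f z)\<^sup>2 + (g z)\<^sup>2)" using f g by (auto simp: square_integrable_def)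
  show "(\<lambda>z. f z * g z) \<in> borel_measurable M" using f g by (auto simp: square_integrable_def)
  have "\<bar>f z\<bar> * \<bar>g z\<bar> \<le> (f z)\<^sup>2 + (g z)\<^sup>2" for z
  proof -
    have "2 * (\<bar>f z\<bar> * \<bar>g z\<bar>) \<le> (f z)\<^sup>2 + (g z)\<^sup>2"
      using sum_squares_bound[of "\<bar>f z\<bar>" "\<bar>g z\<bar>"] by (simp add: mult.assoc)
    moreover have "0 \<le> \<bar>f z\<bar> * \<bar>g z\<bar>" by simp
    ultimately show ?thesis by linarith
  qed
  then show "AE z in M. norm (f z * g z) \<le> norm ((f z)\<^sup>2 + (g z)\<^sup>2)" by (simp add: abs_mult)
qed

lemma square_integrable_add:
  assumes f: "square_integrable M f" and g: "square_integrable M g"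
  shows "square_integrable M (\<lambda>z. f z + g z)"
proof -
  have "integrable M (\<lambda>z. (f z)\<^sup>2 + (g z)\<^sup>2 + 2 * (f z * g z))"
    using f g square_integrable_mult_integrable[OF f g] by (auto simp: square_integrable_def)
  then show ?thesis
    using f g unfolding square_integrable_def power2_sum by (auto simp: mult.assoc)
qed

lemma square_integrable_cmult:
  "square_integrable M f \<Longrightarrow> square_integrable M (\<lambda>z. c * f z)"
  unfolding square_integrable_def by (auto simp: power_mult_distrib)

lemma square_integrable_diff:
  assumes f: "square_integrable M f" and g: "square_integrable M g"
  shows "square_integrable M (\<lambda>z. f z - g z)"
  using square_integrable_add[OF f square_integrable_cmult[OF g, of "-1"]] by simp

lemma norm_L2_nonneg: "0 \<le> norm_L2 M f"
  unfolding norm_L2_def by simp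

lemma norm_L2_cmult: "norm_L2 M (\<lambda>z. c * f z) = \<bar>c\<bar> * norm_L2 M f"
  unfolding norm_L2_def by (simp add: power_mult_distrib real_sqrt_mult)

lemma Cauchy_Schwarz_norm_L2:
  assumes f: "square_integrable M f" and g: "square_integrable M g"
  shows "(\<integral> z. f z * g z \<partial>M) \<le> norm_L2 M f * norm_L2 M g"
proof -
  define A where "A = (\<integral> z. (f z)\<^sup>2 \<partial>M)"
  define B where "B = (\<integral> z. (g z)\<^sup>2 \<partial>M)"
  define c where "c = (\<integral> z. f z * g z \<partial>M)"
  have iA: "integrable M (\<lambda>z. (f z)\<^sup>2)" and iB: "integrable M (\<lambda>z. (g z)\<^sup>2)"
    using f g by (auto simp: square_integrable_def)
  have ic: "integrable M (\<lambda>z. f z * g z)" by (rule square_integrable_mult_integrable[OF f g])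
  have "0 \<le> t\<^sup>2 * A - 2 * t * c + B" for t
  proof -
    have "0 \<le> (\<integral> z. (t * f z - g z)\<^sup>2 \<partial>M)" by simp
    also have "(\<lambda>z. (t * f z - g z)\<^sup>2) = (\<lambda>z. t\<^sup>2 * (f z)\<^sup>2 - 2 * t * (f z * g z) + (g z)\<^sup>2)"
      by (auto simp: fun_eq_iff power2_diff power_mult_distrib algebra_simps)
    also have "(\<integral> z. t\<^sup>2 * (f z)\<^sup>2 - 2 * t * (f z * g z) + (g z)\<^sup>2 \<partial>M) = t\<^sup>2 * A - 2 * t * c + B"
      using iA iB ic unfolding A_def B_def c_def by simp
    finally show ?thesis .
  qed
  then have "c \<le> sqrt A * sqrt B"
    by (intro le_sqrt_mult_if_quadratic_nonneg) (auto simp: A_def B_def)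
  then show ?thesis by (simp add: c_def A_def B_def norm_L2_def)
qed

lemma norm_L2_triangle:
  assumes f: "square_integrable M f" and g: "square_integrable M g"
  shows "norm_L2 M (\<lambda>z. f z + g z) \<le> norm_L2 M f + norm_L2 M g"
proof -
  have iA: "integrable M (\<lambda>z. (f z)\<^sup>2)" and iB: "integrable M (\<lambda>z. (g z)\<^sup>2)"
    using f g by (auto simp: square_integrable_def)
  have ic: "integrable M (\<lambda>z. f z * g z)" by (rule square_integrable_mult_integrable[OF f g])
  have "(\<integral> z. (f z + g z)\<^sup>2 \<partial>M) = (\<integral> z. (f z)\<^sup>2 \<partial>M) + (\<integral> z. (g z)\<^sup>2 \<partial>M) + 2 * (\<integral> z. f z * g z \<partial>M)"
    using iA iB ic by (simp add: power2_sum mult.assoc)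
  also have "\<dots> \<le> (norm_L2 M f)\<^sup>2 + (norm_L2 M g)\<^sup>2 + 2 * (norm_L2 M f * norm_L2 M g)"
    using Cauchy_Schwarz_norm_L2[OF f g] by (simp add: norm_L2_def)
  also have "\<dots> = (norm_L2 M f + norm_L2 M g)\<^sup>2" by (simp add: power2_sum)
  finally have "norm_L2 M (\<lambda>z. f z + g z) \<le> sqrt ((norm_L2 M f + norm_L2 M g)\<^sup>2)"
    unfolding norm_L2_def[of M "\<lambda>z. f z + g z"] by (rule real_sqrt_le_mono)
  also have "\<dots> = norm_L2 M f + norm_L2 M g" using norm_L2_nonneg[of M f] norm_L2_nonneg[of M g] by simp
  finally show ?thesis .
qed

lemma norm_L2_reverse_triangle:
  assumes f: "square_integrable M f" and g: "square_integrable M g"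
  shows "\<bar>norm_L2 M f - norm_L2 M g\<bar> \<le> norm_L2 M (\<lambda>z. f z - g z)"
proof -
  have "norm_L2 M f \<le> norm_L2 M (\<lambda>z. f z - g z) + norm_L2 M g"
    using norm_L2_triangle[OF square_integrable_diff[OF f g] g] by simp
  moreover have "norm_L2 M g \<le> norm_L2 M (\<lambda>z. g z - f z) + norm_L2 M f"
    using norm_L2_triangle[OF square_integrable_diff[OF g f] f] by simp
  moreover have "norm_L2 M (\<lambda>z. g z - f z) = norm_L2 M (\<lambda>z. f z - g z)"
    using norm_L2_cmult[of M "-1" "\<lambda>z. f z - g z"] by simp
  ultimately show ?thesis by linarith
qed

lemma norm_L2_mono:
  assumes g: "square_integrable M g" and f: "f \<in> borel_measurable M" and le: "\<And>z. \<bar>f z\<bar> \<le> \<bar>g z\<bar>"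
  shows "norm_L2 M f \<le> norm_L2 M g"
  unfolding norm_L2_def
proof (rule real_sqrt_le_mono, rule integral_mono)
  show ig: "integrable M (\<lambda>z. (g z)\<^sup>2)" using g by (simp add: square_integrable_def)
  show "(f z)\<^sup>2 \<le> (g z)\<^sup>2" for z using le[of z] by (simp add: abs_le_square_iff)
  then show "integrable M (\<lambda>z. (f z)\<^sup>2)"
    using f by (intro Bochner_Integration.integrable_bound[OF ig]) auto
qed

lemma square_integrable_sqrt_mult_bounded:
  assumes h: "h \<in> borel_measurable M" and h0: "\<And>z. 0 \<le> h z" and hH: "\<And>z. h z \<le> H"
    and f: "square_integrable M f"
  shows "square_integrable M (\<lambda>z. sqrt (h z) * f z)" "norm_L2 M (\<lambda>z. sqrt (h z) * f z) \<le> sqrt H * norm_L2 M f"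
proof -
  have fm: "f \<in> borel_measurable M" and fi: "integrable M (\<lambda>z. (f z)\<^sup>2)"
    using f by (auto simp: square_integrable_def)
  have "integrable M (\<lambda>z. (sqrt (h z) * f z)\<^sup>2)"
  proof (rule Bochner_Integration.integrable_bound)
    show "integrable M (\<lambda>z. H * (f z)\<^sup>2)" using fi by simp
    show "AE z in M. norm ((sqrt (h z) * f z)\<^sup>2) \<le> norm (H * (f z)\<^sup>2)"
      using h0 hH
      by (intro AE_I2) (simp add: power_mult_distrib, metis abs_ge_self mult_right_mono order_trans zero_le_power2)
  qed (use h fm in simp)
  then show sq: "square_integrable M (\<lambda>z. sqrt (h z) * f z)"
    unfolding square_integrable_def using h fm by simp
  have "norm_L2 M (\<lambda>z. sqrt (h z) * f z) \<le> norm_L2 M (\<lambda>z. sqrt H * f z)"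
    using h fm h0 hH
    by (intro norm_L2_mono square_integrable_cmult f)
      (auto simp: abs_mult intro!: mult_right_mono order_trans[OF real_sqrt_le_mono abs_ge_self])
  also have "\<dots> = sqrt H * norm_L2 M f"
    using norm_L2_cmult[of M "sqrt H" f] order_trans[OF h0 hH] by simp
  finally show "norm_L2 M (\<lambda>z. sqrt (h z) * f z) \<le> sqrt H * norm_L2 M f" .
qed

lemma dH_eq_norm_L2: "dH p q = norm_L2 lborel (\<lambda>z. sqrt (p z) - sqrt (q z)) / sqrt 2"
  unfolding dH_def norm_L2_def by (simp add: real_sqrt_mult real_sqrt_divide)

lemma square_integrable_sqrt_prob_dens: "prob_dens p \<Longrightarrow> square_integrable lborel (\<lambda>z. sqrt (p z))"
  unfolding square_integrable_def prob_dens_iff_integral by auto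

lemma dH_sym: "dH p q = dH q p"
  unfolding dH_def by (simp add: power2_commute)

lemma dH_triangle:
  assumes "prob_dens p" "prob_dens q" "prob_dens r"
  shows "dH p r \<le> dH p q + dH q r"
proof -
  have "square_integrable lborel (\<lambda>z. sqrt (p z) - sqrt (q z))" "square_integrable lborel (\<lambda>z. sqrt (q z) - sqrt (r z))"
    using assms by (auto intro!: square_integrable_diff square_integrable_sqrt_prob_dens)
  from norm_L2_triangle[OF this] show ?thesis
    unfolding dH_eq_norm_L2 by (simp add: add_divide_distrib[symmetric] divide_right_mono)
qed

lemma integrable_sqrt_mult_prob_dens:
  assumes "prob_dens p" "prob_dens q"
  shows "integrable lborel (\<lambda>z. sqrt (p z * q z))"
  using square_integrable_mult_integrable[OF square_integrable_sqrt_prob_dens square_integrable_sqrt_prob_dens] assms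
  by (simp add: real_sqrt_mult)

lemma integral_sqrt_diff_square:
  assumes "prob_dens p" "prob_dens q"
  shows "(\<integral> z. (sqrt (p z) - sqrt (q z))\<^sup>2 \<partial>lborel) = 2 - 2 * (\<integral> z. sqrt (p z * q z) \<partial>lborel)"
proof -
  have "(\<lambda>z. (sqrt (p z) - sqrt (q z))\<^sup>2) = (\<lambda>z. p z + q z - 2 * sqrt (p z * q z))"
    using assms by (auto simp: fun_eq_iff power2_diff prob_densD real_sqrt_mult)
  then show ?thesis
    using assms integrable_sqrt_mult_prob_dens[OF assms] by (simp add: prob_densD)
qed

section \<open>Lipschitz bounds for Bayes' rule\<close>

lemma integrable_bounded_mult:
  fixes h a :: "'a \<Rightarrow> real"
  assumes h: "h \<in> borel_measurable M" and h0: "\<And>z. 0 \<le> h z" and hH: "\<And>z. h z \<le> H"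
    and a: "integrable M a"
  shows "integrable M (\<lambda>z. h z * a z)"
proof (rule Bochner_Integration.integrable_bound)
  show "integrable M (\<lambda>z. H * a z)" using a by simp
  show "(\<lambda>z. h z * a z) \<in> borel_measurable M" using h a by auto
  have "\<bar>h z\<bar> \<le> \<bar>H\<bar>" for z using h0[of z] hH[of z] by simp
  then show "AE z in M. norm (h z * a z) \<le> norm (H * a z)" by (simp add: abs_mult mult_right_mono)
qed

lemma integral_indicator_bounded_mult_diff_le:
  fixes h a b :: "'a::euclidean_space \<Rightarrow> real"
  assumes h: "h \<in> borel_measurable lborel" and h0: "\<And>z. 0 \<le> h z" and hH: "\<And>z. h z \<le> H"
    and a: "integrable lborel a" and b: "integrable lborel b" and S: "S \<in> sets lborel"
  shows "(\<integral> z. indicator S z * (h z * a z) - indicator S z * (h z * b z) \<partial>lborel) \<le> H * tv_dens a b"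
  unfolding tv_dens_def
proof (subst integral_mult_right_zero[symmetric], rule integral_mono)
  show "integrable lborel (\<lambda>z. indicator S z * (h z * a z) - indicator S z * (h z * b z))"
    using integrable_mult_indicator[OF S integrable_bounded_mult[OF h h0 hH a]]
      integrable_mult_indicator[OF S integrable_bounded_mult[OF h h0 hH b]] by simp
  show "integrable lborel (\<lambda>z. H * max (a z - b z) 0)" using integrable_max_diff[OF a b] by simp
  fix z
  have "indicator S z * (h z * a z) - indicator S z * (h z * b z) = indicator S z * h z * (a z - b z)"
    by (simp add: algebra_simps)
  also have "\<dots> \<le> h z * max (a z - b z) 0"
    using h0[of z] by (auto simp: indicator_def mult_left_mono)
  also have "\<dots> \<le> H * max (a z - b z) 0" using hH[of z] by (simp add: mult_right_mono)
  finally show "indicator S z * (h z * a z) - indicator S z * (h z * b z) \<le> H * max (a z - b z) 0" .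
qed

text \<open>The algebraic core of \<open>tv_dens_Bayes_le\<close>: \<open>\<alpha>\<close> and \<open>\<gamma>\<close> are the masses under \<open>h a\<close> and \<open>h b\<close>
  of the set where the first posterior dominates, \<open>Za\<close> and \<open>Zb\<close> the total masses.\<close>

lemma normalised_mass_diff_le:
  fixes Za Zb \<alpha> \<gamma> B :: real
  assumes Za: "Za > 0" and Zb: "Zb > 0" and \<gamma>: "0 \<le> \<gamma>" "\<gamma> \<le> Zb"
    and inside: "\<alpha> - \<gamma> \<le> B" and outside: "(Zb - \<gamma>) - (Za - \<alpha>) \<le> B"
  shows "\<alpha> / Za - \<gamma> / Zb \<le> B / Za"
proof -
  have "\<alpha> * Zb - \<gamma> * Za = (\<alpha> - \<gamma>) * (Zb - \<gamma>) + \<gamma> * ((Zb - \<gamma>) - (Za - \<alpha>))"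
    by (simp add: algebra_simps)
  also have "\<dots> \<le> B * (Zb - \<gamma>) + \<gamma> * B"
    using inside outside \<gamma> by (intro add_mono mult_right_mono mult_left_mono) auto
  also have "\<dots> = B * Zb" by (simp add: algebra_simps)
  finally have "(\<alpha> * Zb - \<gamma> * Za) / (Za * Zb) \<le> B * Zb / (Za * Zb)"
    using Za Zb by (intro divide_right_mono) auto
  then show ?thesis using Za Zb by (simp add: field_simps)
qed

lemma tv_dens_Bayes_le:
  fixes h a b :: "'a::euclidean_space \<Rightarrow> real"
  assumes h[measurable]: "h \<in> borel_measurable lborel" and h0: "\<And>z. 0 \<le> h z" and hH: "\<And>z. h z \<le> H"
    and a: "prob_dens a" and b: "prob_dens b"
    and Za: "Za = (\<integral> z. h z * a z \<partial>lborel)" "Za > 0"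
    and Zb: "Zb = (\<integral> z. h z * b z \<partial>lborel)" "Zb > 0"
  shows "tv_dens (\<lambda>z. h z * a z / Za) (\<lambda>z. h z * b z / Zb) \<le> H / Za * tv_dens a b"
proof -
  note [measurable] = prob_densD(1)[OF a] prob_densD(1)[OF b]
  have ia: "integrable lborel a" and ib: "integrable lborel b" using a b by (auto dest: prob_densD)
  have iha: "integrable lborel (\<lambda>z. h z * a z)" by (rule integrable_bounded_mult[OF h h0 hH ia])
  have ihb: "integrable lborel (\<lambda>z. h z * b z)" by (rule integrable_bounded_mult[OF h h0 hH ib])
  define A where "A = {z. h z * b z / Zb < h z * a z / Za}"
  have A: "A \<in> sets lborel" and A': "- A \<in> sets lborel" unfolding A_def by measurable
  define \<alpha> where "\<alpha> = (\<integral> z. indicator A z * (h z * a z) \<partial>lborel)"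
  define \<gamma> where "\<gamma> = (\<integral> z. indicator A z * (h z * b z) \<partial>lborel)"
  have Za_\<alpha>: "Za - \<alpha> = (\<integral> z. indicator (- A) z * (h z * a z) \<partial>lborel)"
   and Zb_\<gamma>: "Zb - \<gamma> = (\<integral> z. indicator (- A) z * (h z * b z) \<partial>lborel)"
    unfolding Za Zb \<alpha>_def \<gamma>_def
    using iha ihb integrable_mult_indicator[OF A iha] integrable_mult_indicator[OF A ihb]
    by (auto simp flip: Bochner_Integration.integral_diff intro!: Bochner_Integration.integral_cong
             simp: indicator_def)
  have "tv_dens (\<lambda>z. h z * a z / Za) (\<lambda>z. h z * b z / Zb)
      = (\<integral> z. indicator A z * (h z * a z / Za) \<partial>lborel) - (\<integral> z. indicator A z * (h z * b z / Zb) \<partial>lborel)"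
    unfolding A_def by (rule tv_dens_eq_integral_diff) (use iha ihb in auto)
  also have "\<dots> = \<alpha> / Za - \<gamma> / Zb" by (simp add: \<alpha>_def \<gamma>_def)
  also have "\<dots> \<le> H * tv_dens a b / Za"
  proof (rule normalised_mass_diff_le[OF Za(2) Zb(2)])
    show "0 \<le> \<gamma>" "\<gamma> \<le> Zb"
      unfolding \<gamma>_def Zb using integral_indicator_mult_bounds[OF _ ihb A] h0 prob_densD(2)[OF b] by auto
    show "\<alpha> - \<gamma> \<le> H * tv_dens a b"
      unfolding \<alpha>_def \<gamma>_def
      using integral_indicator_bounded_mult_diff_le[OF h h0 hH ia ib A]
        integrable_mult_indicator[OF A iha] integrable_mult_indicator[OF A ihb] by simp
    show "(Zb - \<gamma>) - (Za - \<alpha>) \<le> H * tv_dens a b"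
      unfolding Za_\<alpha> Zb_\<gamma> tv_dens_sym[OF a b]
      using integral_indicator_bounded_mult_diff_le[OF h h0 hH ib ia A']
        integrable_mult_indicator[OF A' iha] integrable_mult_indicator[OF A' ihb] by simp
  qed
  finally show ?thesis by simp
qed

lemma dH_Bayes_le:
  fixes h a b :: "'a::euclidean_space \<Rightarrow> real"
  assumes h[measurable]: "h \<in> borel_measurable lborel" and h0: "\<And>z. 0 \<le> h z" and hH: "\<And>z. h z \<le> H"
    and a: "prob_dens a" and b: "prob_dens b"
    and Za: "Za = (\<integral> z. h z * a z \<partial>lborel)" "Za > 0"
    and Zb: "Zb = (\<integral> z. h z * b z \<partial>lborel)" "Zb > 0"
  shows "dH (\<lambda>z. h z * a z / Za) (\<lambda>z. h z * b z / Zb) \<le> 2 * sqrt (H / Za) * dH a b"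
proof -
  let ?N = "norm_L2 lborel"
  have a0: "0 \<le> a z" "0 \<le> b z" for z using a b by (auto dest: prob_densD)
  define D where "D = (\<lambda>z. sqrt (a z) - sqrt (b z))"
  have LD: "square_integrable lborel D"
    unfolding D_def using a b by (intro square_integrable_diff square_integrable_sqrt_prob_dens)
  note hD = square_integrable_sqrt_mult_bounded[OF h h0 hH LD]
  have Lha: "square_integrable lborel (\<lambda>z. sqrt (h z) * sqrt (a z))"
   and Lhb: "square_integrable lborel (\<lambda>z. sqrt (h z) * sqrt (b z))"
    using square_integrable_sqrt_mult_bounded(1)[OF h h0 hH square_integrable_sqrt_prob_dens] a b by auto
  have Nha: "?N (\<lambda>z. sqrt (h z) * sqrt (a z)) = sqrt Za"
   and Nhb: "?N (\<lambda>z. sqrt (h z) * sqrt (b z)) = sqrt Zb"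
    unfolding norm_L2_def Za Zb using h0 a0 by (simp_all add: power_mult_distrib)
  \<comment> \<open>Split off the change of normalisation: its norm \<open>\<bar>\<surd>Za - \<surd>Zb\<bar> / \<surd>Za\<close> is controlled by the
     reverse triangle inequality.\<close>
  define c where "c = 1 / sqrt Za - 1 / sqrt Zb"
  have eq: "(\<lambda>z. sqrt (h z * a z / Za) - sqrt (h z * b z / Zb))
      = (\<lambda>z. (1 / sqrt Za) * (sqrt (h z) * D z) + c * (sqrt (h z) * sqrt (b z)))"
    by (auto simp: fun_eq_iff D_def c_def real_sqrt_mult real_sqrt_divide algebra_simps)
  have "\<bar>sqrt Za - sqrt Zb\<bar> \<le> ?N (\<lambda>z. sqrt (h z) * sqrt (a z) - sqrt (h z) * sqrt (b z))"
    using norm_L2_reverse_triangle[OF Lha Lhb] unfolding Nha Nhb .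
  also have "(\<lambda>z. sqrt (h z) * sqrt (a z) - sqrt (h z) * sqrt (b z)) = (\<lambda>z. sqrt (h z) * D z)"
    by (simp add: D_def fun_eq_iff algebra_simps)
  finally have "\<bar>sqrt Za - sqrt Zb\<bar> \<le> ?N (\<lambda>z. sqrt (h z) * D z)" .
  then have "\<bar>c\<bar> * sqrt Zb \<le> ?N (\<lambda>z. sqrt (h z) * D z) / sqrt Za"
    using Za(2) Zb(2) by (simp add: c_def field_simps abs_minus_commute)
  then have "?N (\<lambda>z. sqrt (h z * a z / Za) - sqrt (h z * b z / Zb)) \<le> 2 * ?N (\<lambda>z. sqrt (h z) * D z) / sqrt Za"
    using norm_L2_triangle[OF square_integrable_cmult[OF hD(1)] square_integrable_cmult[OF Lhb], of "1 / sqrt Za" c]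
    unfolding eq norm_L2_cmult Nhb using Za(2) by simp
  also have "\<dots> \<le> 2 * (sqrt H * ?N D) / sqrt Za"
    using hD(2) Za(2) by (intro divide_right_mono mult_left_mono) auto
  finally show ?thesis
    unfolding dH_eq_norm_L2 D_def[symmetric] using Za(2)
    by (simp add: divide_right_mono real_sqrt_divide field_simps)
qed

lemma prob_dens_Bayes:
  fixes h a :: "'a::euclidean_space \<Rightarrow> real"
  assumes h: "h \<in> borel_measurable lborel" and h0: "\<And>z. 0 \<le> h z" and hH: "\<And>z. h z \<le> H"
    and a: "prob_dens a" and Z: "Z = (\<integral> z. h z * a z \<partial>lborel)" "Z > 0"
  shows "prob_dens (\<lambda>z. h z * a z / Z)"
proof -
  have "0 \<le> h z * a z / Z" for z using h0[of z] prob_densD(2)[OF a, of z] Z(2) by simp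
  then show ?thesis
    unfolding prob_dens_iff_integral
    using integrable_bounded_mult[OF h h0 hH prob_densD(3)[OF a]] h a Z by (auto dest: prob_densD)
qed

section \<open>Pinsker's inequality and the Hellinger bound by the KL divergence\<close>

lemma mult_ln_divide_ge_Donsker_Varadhan:
  fixes q r \<phi> :: real
  assumes "q > 0" "r > 0"
  shows "q * \<phi> - r * exp \<phi> + q \<le> q * ln (q / r)"
proof -
  have "ln (r * exp \<phi> / q) \<le> r * exp \<phi> / q - 1" using assms by (intro ln_le_minus_one) simp
  moreover have "ln (r * exp \<phi> / q) = \<phi> - ln (q / r)"
    using assms by (simp add: ln_div ln_mult)
  ultimately have "q * (\<phi> - ln (q / r)) \<le> q * (r * exp \<phi> / q - 1)"
    using assms by (intro mult_left_mono) auto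
  then show ?thesis using assms by (simp add: algebra_simps)
qed

lemma mult_ln_divide_ge_Hellinger:
  fixes q r :: real
  assumes "q > 0" "r > 0"
  shows "2 * q - 2 * sqrt (q * r) \<le> q * ln (q / r)"
proof -
  have "ln (sqrt (r / q)) \<le> sqrt (r / q) - 1" using assms by (intro ln_le_minus_one) simp
  moreover have "ln (sqrt (r / q)) = - ln (q / r) / 2"
    using assms by (simp add: ln_sqrt ln_div)
  ultimately have "q * (- ln (q / r)) \<le> q * (2 * sqrt (r / q) - 2)"
    using assms by (intro mult_left_mono) auto
  moreover have "q * sqrt (r / q) = sqrt (q * r)"
    using assms by (simp add: real_sqrt_divide real_sqrt_mult field_simps)
  ultimately show ?thesis by (simp add: algebra_simps)
qed

lemma integral_le_KL:
  fixes q r F :: "'a::euclidean_space \<Rightarrow> real"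
  assumes q: "prob_dens q" and ae: "AE z in lborel. 0 < q z \<longrightarrow> 0 < r z"
    and iKL: "integrable lborel (\<lambda>z. q z * ln (q z / r z))" and iF: "integrable lborel F"
    and pos: "\<And>z. 0 < q z \<Longrightarrow> 0 < r z \<Longrightarrow> F z \<le> q z * ln (q z / r z)"
    and zero: "\<And>z. q z = 0 \<Longrightarrow> F z \<le> 0"
  shows "(\<integral> z. F z \<partial>lborel) \<le> (\<integral> z. q z * ln (q z / r z) \<partial>lborel)"
  using ae
proof (intro integral_mono_AE[OF iF iKL], eventually_elim)
  case (elim z)
  show ?case
  proof (cases "q z = 0")
    case True
    then show ?thesis using zero by simp
  next
    case False
    then have "0 < q z" using prob_densD(2)[OF q, of z] by simp
    then show ?thesis using elim pos by simp
  qed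
qed

lemma Pinsker_tv_dens:
  fixes q r :: "'a::euclidean_space \<Rightarrow> real"
  assumes q: "prob_dens q" and r: "prob_dens r" and ae: "AE z in lborel. 0 < q z \<longrightarrow> 0 < r z"
    and iKL: "integrable lborel (\<lambda>z. q z * ln (q z / r z))"
  shows "2 * (tv_dens q r)\<^sup>2 \<le> (\<integral> z. q z * ln (q z / r z) \<partial>lborel)"
proof -
  note [measurable] = prob_densD(1)[OF q] prob_densD(1)[OF r]
  have iq: "integrable lborel q" and ir: "integrable lborel r" using q r by (auto dest: prob_densD)
  define A where "A = {z. r z < q z}"
  have A: "A \<in> sets lborel" unfolding A_def by measurable
  define \<alpha> where "\<alpha> = (\<integral> z. indicator A z * q z \<partial>lborel)"
  define \<beta> where "\<beta> = (\<integral> z. indicator A z * r z \<partial>lborel)"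
  have iAq: "integrable lborel (\<lambda>z. indicator A z * q z)" and iAr: "integrable lborel (\<lambda>z. indicator A z * r z)"
    using integrable_mult_indicator[OF A iq] integrable_mult_indicator[OF A ir] by auto
  have tv: "tv_dens q r = \<alpha> - \<beta>"
    unfolding \<alpha>_def \<beta>_def A_def using iq ir by (intro tv_dens_eq_integral_diff) auto
  have \<beta>: "0 \<le> \<beta>" "\<beta> \<le> 1"
    using integral_indicator_mult_bounds[OF prob_densD(2)[OF r] ir A] prob_densD(4)[OF r] by (auto simp: \<beta>_def)
  \<comment> \<open>Test the Donsker--Varadhan inequality against \<open>\<phi> = c 1\<^sub>A + \<kappa>\<close>, with \<open>\<kappa>\<close> normalising
     \<open>\<integral> r e\<^sup>\<phi> = 1\<close>; Hoeffding's lemma then bounds the log-moment-generating term.\<close>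
  define c where "c = 4 * tv_dens q r"
  have c: "0 \<le> c" by (simp add: c_def tv_dens_nonneg)
  define D where "D = 1 + \<beta> * (exp c - 1)"
  have D: "0 < D" unfolding D_def using \<beta> c by (smt (verit) mult_nonneg_nonneg one_le_exp_iff)
  define \<kappa> where "\<kappa> = - ln D"
  define F where "F z = q z * (c * indicator A z + \<kappa>) - r z * exp (c * indicator A z + \<kappa>) + q z" for z
  have exp_\<phi>: "exp (c * indicator A z + \<kappa>) = exp \<kappa> + exp \<kappa> * (exp c - 1) * indicator A z" for z
    by (simp add: indicator_def exp_add algebra_simps)
  have F_eq: "F = (\<lambda>z. c * (indicator A z * q z) + \<kappa> * q z - exp \<kappa> * r z
      - exp \<kappa> * (exp c - 1) * (indicator A z * r z) + q z)"
    unfolding F_def exp_\<phi> by (auto simp: fun_eq_iff algebra_simps)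
  have iF: "integrable lborel F" unfolding F_eq using iq ir iAq iAr by simp
  have "c * \<alpha> - ln D = c * \<alpha> + \<kappa> - exp \<kappa> * D + 1" using D by (simp add: \<kappa>_def exp_minus)
  also have "\<dots> = (\<integral> z. F z \<partial>lborel)"
    unfolding F_eq using iq ir iAq iAr prob_densD(4)[OF q] prob_densD(4)[OF r]
    by (simp add: \<alpha>_def \<beta>_def D_def algebra_simps)
  also have "(\<integral> z. F z \<partial>lborel) \<le> (\<integral> z. q z * ln (q z / r z) \<partial>lborel)"
  proof (rule integral_le_KL[OF q ae iKL iF])
    show "F z \<le> q z * ln (q z / r z)" if "0 < q z" "0 < r z" for z
      unfolding F_def by (rule mult_ln_divide_ge_Donsker_Varadhan[OF that])
    show "F z \<le> 0" if "q z = 0" for z using prob_densD(2)[OF r, of z] unfolding F_def that by simp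
  qed
  finally have "c * \<alpha> - ln D \<le> (\<integral> z. q z * ln (q z / r z) \<partial>lborel)" .
  moreover have "c * (\<alpha> - \<beta>) - c\<^sup>2 / 8 \<le> c * \<alpha> - ln D"
    using Hoeffdings_lemma_aux[OF c \<beta>(1)] unfolding D_def by (simp add: algebra_simps)
  moreover have "c * (\<alpha> - \<beta>) - c\<^sup>2 / 8 = 2 * (tv_dens q r)\<^sup>2"
    unfolding c_def tv by (simp add: power2_eq_square field_simps)
  ultimately show ?thesis by linarith
qed

lemma Hellinger_le_KL:
  fixes q r :: "'a::euclidean_space \<Rightarrow> real"
  assumes q: "prob_dens q" and r: "prob_dens r" and ae: "AE z in lborel. 0 < q z \<longrightarrow> 0 < r z"
    and iKL: "integrable lborel (\<lambda>z. q z * ln (q z / r z))"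
  shows "(\<integral> z. (sqrt (q z) - sqrt (r z))\<^sup>2 \<partial>lborel) \<le> (\<integral> z. q z * ln (q z / r z) \<partial>lborel)"
proof -
  have iF: "integrable lborel (\<lambda>z. 2 * q z - 2 * sqrt (q z * r z))"
    using prob_densD(3)[OF q] integrable_sqrt_mult_prob_dens[OF q r] by simp
  have "(\<integral> z. 2 * q z - 2 * sqrt (q z * r z) \<partial>lborel) = 2 - 2 * (\<integral> z. sqrt (q z * r z) \<partial>lborel)"
    using prob_densD(3,4)[OF q] integrable_sqrt_mult_prob_dens[OF q r] by simp
  then show ?thesis
    using integral_le_KL[OF q ae iKL iF mult_ln_divide_ge_Hellinger] integral_sqrt_diff_square[OF q r]
    by simp
qed

lemma KL_Bayes_eq_log_evidence_minus_ELBO: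
  fixes q a h :: "'a::euclidean_space \<Rightarrow> real"
  assumes q: "prob_dens q" and [measurable]: "h \<in> borel_measurable lborel" "a \<in> borel_measurable lborel"
    and h0: "\<And>z. 0 < h z" and Z: "Z > 0"
    and ae: "AE z in lborel. 0 < q z \<longrightarrow> 0 < a z"
    and i1: "integrable lborel (\<lambda>z. q z * ln (h z * a z))"
    and i2: "integrable lborel (\<lambda>z. q z * ln (q z))"
  shows "integrable lborel (\<lambda>z. q z * ln (q z / (h z * a z / Z)))"
    "(\<integral> z. q z * ln (q z / (h z * a z / Z)) \<partial>lborel)
      = ln Z - ((\<integral> z. q z * ln (h z * a z) \<partial>lborel) - (\<integral> z. q z * ln (q z) \<partial>lborel))"
proof -
  define K where "K z = q z * ln (q z) - q z * ln (h z * a z) + q z * ln Z" for z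
  have iK: "integrable lborel K" unfolding K_def using i1 i2 prob_densD(3)[OF q] by simp
  have "AE z in lborel. K z = q z * ln (q z / (h z * a z / Z))"
    using ae
  proof eventually_elim
    case (elim z)
    show ?case
    proof (cases "q z = 0")
      case False
      then have "0 < q z" "0 < a z" using prob_densD(2)[OF q, of z] elim by auto
      then have eq: "ln (q z / (h z * a z / Z)) = ln (q z) - ln (h z * a z) + ln Z"
        using h0[of z] Z by (simp add: ln_div ln_mult)
      show ?thesis unfolding K_def eq by (simp add: algebra_simps)
    qed (simp add: K_def)
  qed
  note aeK = this
  note [measurable] = prob_densD(1)[OF q]
  have [measurable]: "K \<in> borel_measurable lborel" using iK by auto
  show "integrable lborel (\<lambda>z. q z * ln (q z / (h z * a z / Z)))"
    by (rule integrable_cong_AE_imp[OF iK _ aeK]) measurable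
  have "(\<integral> z. K z \<partial>lborel) = (\<integral> z. q z * ln (q z / (h z * a z / Z)) \<partial>lborel)"
    by (rule integral_cong_AE[OF _ _ aeK]) measurable
  then show "(\<integral> z. q z * ln (q z / (h z * a z / Z)) \<partial>lborel)
      = ln Z - ((\<integral> z. q z * ln (h z * a z) \<partial>lborel) - (\<integral> z. q z * ln (q z) \<partial>lborel))"
    using i1 i2 prob_densD(3,4)[OF q] by (simp add: K_def)
qed

section \<open>Maximal coupling and the Wasserstein distance\<close>

definition sum_measure :: "'a measure \<Rightarrow> 'a measure \<Rightarrow> 'a measure" where
  "sum_measure K1 K2 = bind (count_space UNIV) (\<lambda>b. if b then K1 else K2)"

lemma
  assumes "subprob_space K1" "subprob_space K2" "sets K1 = sets N" "sets K2 = sets N"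
  shows sets_sum_measure: "sets (sum_measure K1 K2) = sets N"
    and emeasure_sum_measure: "X \<in> sets N \<Longrightarrow> emeasure (sum_measure K1 K2) X = emeasure K1 X + emeasure K2 X"
proof -
  have K: "(\<lambda>b. if b then K1 else K2) \<in> measurable (count_space UNIV) (subprob_algebra N)"
    using assms by (auto simp: space_subprob_algebra)
  show "sets (sum_measure K1 K2) = sets N"
    unfolding sum_measure_def by (rule sets_bind[where N=N]) (use assms in auto)
  show "emeasure (sum_measure K1 K2) X = emeasure K1 X + emeasure K2 X" if "X \<in> sets N"
    unfolding sum_measure_def using that K
    by (subst emeasure_bind[where N=N]) (auto simp: nn_integral_count_space_finite UNIV_bool add.commute)
qed

lemma couplingI:
  fixes \<gamma> :: "('a::topological_space \<times> 'a) measure"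
  assumes sets: "sets \<gamma> = sets (borel \<Otimes>\<^sub>M borel)"
    and M: "prob_space M" "sets M = sets borel" and N: "sets N = sets borel"
    and marg_fst: "\<And>A. A \<in> sets borel \<Longrightarrow> emeasure \<gamma> (A \<times> UNIV) = emeasure M A"
    and marg_snd: "\<And>B. B \<in> sets borel \<Longrightarrow> emeasure \<gamma> (UNIV \<times> B) = emeasure N B"
  shows "\<gamma> \<in> couplings M N"
proof -
  have space: "space \<gamma> = UNIV" using sets_eq_imp_space_eq[OF sets] by (simp add: space_pair_measure)
  have fst: "fst \<in> measurable \<gamma> borel" and snd: "snd \<in> measurable \<gamma> borel"
    using measurable_cong_sets[OF sets refl] by auto
  have "distr \<gamma> borel fst = M"
  proof (rule measure_eqI)
    fix A assume "A \<in> sets (distr \<gamma> borel fst)"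
    then have A: "A \<in> sets borel" by simp
    have "fst -` A \<inter> space \<gamma> = A \<times> UNIV" using space by auto
    then show "emeasure (distr \<gamma> borel fst) A = emeasure M A"
      using marg_fst[OF A] by (simp add: emeasure_distr[OF fst A])
  qed (use M in simp)
  moreover have "distr \<gamma> borel snd = N"
  proof (rule measure_eqI)
    fix B assume "B \<in> sets (distr \<gamma> borel snd)"
    then have B: "B \<in> sets borel" by simp
    have "snd -` B \<inter> space \<gamma> = UNIV \<times> B" using space by auto
    then show "emeasure (distr \<gamma> borel snd) B = emeasure N B"
      using marg_snd[OF B] by (simp add: emeasure_distr[OF snd B])
  qed (use N in simp)
  moreover have "prob_space \<gamma>"
  proof
    have "space M = UNIV" using sets_eq_imp_space_eq[OF M(2)] by simp
    then show "emeasure \<gamma> (space \<gamma>) = 1"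
      using marg_fst[of UNIV] prob_space.emeasure_space_1[OF M(1)] space by simp
  qed
  ultimately show ?thesis using sets by (simp add: couplings_def)
qed

lemma off_diagonal_in_sets_pair_borel:
  "{x :: 'a::euclidean_space \<times> 'a. fst x \<noteq> snd x} \<in> sets (borel \<Otimes>\<^sub>M borel)"
proof -
  have "{x \<in> space (borel \<Otimes>\<^sub>M borel). fst x = (snd x :: 'a)} \<in> sets (borel \<Otimes>\<^sub>M borel)"
    by (rule measurable_equality_set) (rule measurable_fst, rule measurable_snd)
  from sets.compl_sets[OF this] show ?thesis by (simp add: space_pair_measure set_diff_eq)
qed

lemma emeasure_density_pair_Times:
  fixes f g :: "'a::euclidean_space \<Rightarrow> real"
  assumes [measurable]: "f \<in> borel_measurable lborel" "g \<in> borel_measurable lborel"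
    and f0: "\<And>z. 0 \<le> f z" and g0: "\<And>z. 0 \<le> g z" and fi: "integrable lborel f" and gi: "integrable lborel g"
    and A: "A \<in> sets borel" and B: "B \<in> sets borel"
  shows "emeasure (density lborel (\<lambda>z. ennreal (f z)) \<Otimes>\<^sub>M density lborel (\<lambda>z. ennreal (g z))) (A \<times> B)
    = ennreal ((\<integral> z. indicator A z * f z \<partial>lborel) * (\<integral> z. indicator B z * g z \<partial>lborel))"
proof -
  have "finite_measure (density lborel (\<lambda>z. ennreal (g z)))"
    using emeasure_density_eq_integral[of g UNIV] gi g0 by (intro finite_measureI) simp
  then interpret G: sigma_finite_measure "density lborel (\<lambda>z. ennreal (g z))"
    by (rule finite_measure.axioms)
  show ?thesis
    using A B integral_indicator_mult_bounds(1)[OF f0 fi, of A]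
    by (simp add: G.emeasure_pair_measure_Times emeasure_density_eq_integral f0 g0 fi gi ennreal_mult)
qed

lemma emeasure_diagonal_density:
  fixes m :: "'a::euclidean_space \<Rightarrow> real"
  assumes [measurable]: "m \<in> borel_measurable lborel" and m0: "\<And>z. 0 \<le> m z" and im: "integrable lborel m"
    and X: "X \<in> sets (borel \<Otimes>\<^sub>M borel)"
  shows "emeasure (distr (density lborel (\<lambda>z. ennreal (m z))) (borel \<Otimes>\<^sub>M borel) (\<lambda>x. (x, x))) X
    = ennreal (\<integral> z. indicator ((\<lambda>x. (x, x)) -` X) z * m z \<partial>lborel)"
proof -
  have "(\<lambda>x. (x, x)) -` X \<in> sets lborel" using measurable_sets[OF _ X, of "\<lambda>x. (x, x)" lborel] by simp
  then show ?thesis using X by (subst emeasure_distr) (auto simp: emeasure_density_eq_integral[OF _ _ m0 im])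
qed

lemma integral_indicator_normalised:
  fixes e :: "'a::euclidean_space \<Rightarrow> real"
  assumes e0: "\<And>z. 0 \<le> e z" and ei: "integrable lborel e" and t: "(\<integral> z. e z \<partial>lborel) = t"
    and A: "A \<in> sets lborel"
  shows "(\<integral> z. indicator A z * (inverse t * e z) \<partial>lborel) * t = (\<integral> z. indicator A z * e z \<partial>lborel)"
proof (cases "t = 0")
  case True
  then show ?thesis using integral_indicator_mult_bounds[OF e0 ei A] t by simp
qed (simp add: mult.left_commute)

lemma emeasure_density_add:
  fixes m f :: "'a::euclidean_space \<Rightarrow> real"
  assumes [measurable]: "m \<in> borel_measurable lborel" "f \<in> borel_measurable lborel"
    and m0: "\<And>z. 0 \<le> m z" and f0: "\<And>z. 0 \<le> f z" and im: "integrable lborel m" and fi: "integrable lborel f"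
    and A: "A \<in> sets borel"
  shows "emeasure (density lborel (\<lambda>z. ennreal (m z + f z))) A
    = ennreal (\<integral> z. indicator A z * m z \<partial>lborel) + ennreal (\<integral> z. indicator A z * f z \<partial>lborel)"
  using A integral_indicator_mult_bounds(1)[OF m0 im, of A] integral_indicator_mult_bounds(1)[OF f0 fi, of A]
    integrable_mult_indicator[OF _ im, of A] integrable_mult_indicator[OF _ fi, of A] m0 f0 im fi
  by (simp add: emeasure_density_eq_integral add_nonneg_nonneg distrib_left flip: ennreal_plus)

context
  fixes m e g :: "'a::euclidean_space \<Rightarrow> real" and t :: real
  assumes m_measurable[measurable]: "m \<in> borel_measurable lborel"
    and e_measurable[measurable]: "e \<in> borel_measurable lborel"
    and g_measurable[measurable]: "g \<in> borel_measurable lborel"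
    and m0: "\<And>z. 0 \<le> m z" and e0: "\<And>z. 0 \<le> e z" and g0: "\<And>z. 0 \<le> g z"
    and im: "integrable lborel m" and ie: "integrable lborel e" and ig: "integrable lborel g"
    and int_m: "(\<integral> z. m z \<partial>lborel) = 1 - t" and int_e: "(\<integral> z. e z \<partial>lborel) = t"
    and int_g: "(\<integral> z. g z \<partial>lborel) = t"
begin

definition diagonal_part :: "('a \<times> 'a) measure" where
  "diagonal_part = distr (density lborel (\<lambda>z. ennreal (m z))) (borel \<Otimes>\<^sub>M borel) (\<lambda>x. (x, x))"

definition excess_part :: "('a \<times> 'a) measure" where
  "excess_part = density lborel (\<lambda>z. ennreal (inverse t * e z)) \<Otimes>\<^sub>M density lborel (\<lambda>z. ennreal (g z))"

definition overlap_coupling :: "('a \<times> 'a) measure" where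
  "overlap_coupling = sum_measure diagonal_part excess_part"

lemma sets_diagonal_part: "sets diagonal_part = sets (borel \<Otimes>\<^sub>M borel)"
  by (simp add: diagonal_part_def)

lemma sets_excess_part: "sets excess_part = sets (borel \<Otimes>\<^sub>M borel)"
  unfolding excess_part_def by (auto intro!: sets_pair_measure_cong)

lemma emeasure_diagonal_part:
  "X \<in> sets (borel \<Otimes>\<^sub>M borel) \<Longrightarrow>
    emeasure diagonal_part X = ennreal (\<integral> z. indicator ((\<lambda>x. (x, x)) -` X) z * m z \<partial>lborel)"
  unfolding diagonal_part_def by (rule emeasure_diagonal_density[OF m_measurable m0 im])

lemma emeasure_excess_part_Times:
  assumes "A \<in> sets borel" "B \<in> sets borel"
  shows "emeasure excess_part (A \<times> B)
    = ennreal ((\<integral> z. indicator A z * (inverse t * e z) \<partial>lborel) * (\<integral> z. indicator B z * g z \<partial>lborel))"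
proof -
  have "0 \<le> t" using int_e e0 integral_nonneg_AE[of e lborel] by simp
  then show ?thesis
    unfolding excess_part_def using assms e0 g0 ie ig by (intro emeasure_density_pair_Times) auto
qed

lemma overlap_mass_bounds: "0 \<le> t" "t \<le> 1"
  using int_e e0 integral_nonneg_AE[of e lborel] int_m m0 integral_nonneg_AE[of m lborel] by simp_all

lemma emeasure_excess_part_UNIV: "emeasure excess_part UNIV = ennreal t"
  using emeasure_excess_part_Times[of UNIV UNIV] int_e int_g by (cases "t = 0") (simp_all add: field_simps)

lemma subprob_space_parts: "subprob_space diagonal_part" "subprob_space excess_part"
proof -
  have UNIV: "UNIV \<in> sets (borel \<Otimes>\<^sub>M borel)"
    using sets.top[of "borel \<Otimes>\<^sub>M borel"] by (simp add: space_pair_measure)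
  have space: "space diagonal_part = UNIV" "space excess_part = UNIV"
    using sets_eq_imp_space_eq[OF sets_diagonal_part] sets_eq_imp_space_eq[OF sets_excess_part]
    by (simp_all add: space_pair_measure)
  show "subprob_space diagonal_part"
    using emeasure_diagonal_part[OF UNIV] int_m overlap_mass_bounds space by (intro subprob_spaceI) simp_all
  show "subprob_space excess_part"
    using emeasure_excess_part_UNIV overlap_mass_bounds space by (intro subprob_spaceI) simp_all
qed

lemmas sets_overlap_coupling = sets_sum_measure[OF subprob_space_parts sets_diagonal_part sets_excess_part,
    folded overlap_coupling_def]
  and emeasure_overlap_coupling = emeasure_sum_measure[OF subprob_space_parts sets_diagonal_part sets_excess_part,
    folded overlap_coupling_def]

lemma overlap_coupling_couplings:
  "overlap_coupling \<in> couplings (density lborel (\<lambda>z. ennreal (m z + e z))) (density lborel (\<lambda>z. ennreal (m z + g z)))"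
proof (rule couplingI[OF sets_overlap_coupling])
  fix A :: "'a set" assume A: "A \<in> sets borel"
  show "emeasure overlap_coupling (A \<times> UNIV) = emeasure (density lborel (\<lambda>z. ennreal (m z + e z))) A"
    using A emeasure_diagonal_part[of "A \<times> UNIV"] emeasure_excess_part_Times[of A UNIV] emeasure_overlap_coupling[of "A \<times> UNIV"]
      int_g integral_indicator_normalised[OF e0 ie int_e, of A] emeasure_density_add[OF _ _ m0 e0 im ie A]
    by (simp add: vimage_def)
next
  fix B :: "'a set" assume B: "B \<in> sets borel"
  have g_B: "inverse t * (\<integral> z. e z \<partial>lborel) * (\<integral> z. indicator B z * g z \<partial>lborel)
      = (\<integral> z. indicator B z * g z \<partial>lborel)"
    using integral_indicator_normalised[OF g0 ig int_g, of B] B int_e by (simp add: mult_ac)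
  show "emeasure overlap_coupling (UNIV \<times> B) = emeasure (density lborel (\<lambda>z. ennreal (m z + g z))) B"
    using B emeasure_diagonal_part[of "UNIV \<times> B"] emeasure_excess_part_Times[of UNIV B] emeasure_overlap_coupling[of "UNIV \<times> B"]
      emeasure_density_add[OF _ _ m0 g0 im ig B]
    by (simp add: vimage_def g_B)
next
  have "emeasure (density lborel (\<lambda>z. ennreal (m z + e z))) UNIV = 1"
    using emeasure_density_add[OF m_measurable e_measurable m0 e0 im ie, of UNIV] int_m int_e overlap_mass_bounds
    by (simp flip: ennreal_plus)
  then show "prob_space (density lborel (\<lambda>z. ennreal (m z + e z)))"
    by (intro prob_spaceI) simp
qed auto

lemma emeasure_overlap_coupling_off_diagonal: "emeasure overlap_coupling {x. fst x \<noteq> snd x} \<le> ennreal t"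
proof -
  note off = off_diagonal_in_sets_pair_borel[where 'a='a]
  have UNIV: "UNIV \<in> sets (borel \<Otimes>\<^sub>M borel)"
    using sets.top[of "borel \<Otimes>\<^sub>M borel"] by (simp add: space_pair_measure)
  have "emeasure diagonal_part {x. fst x \<noteq> snd x} = 0"
    using emeasure_diagonal_part[OF off] by (simp add: vimage_def)
  moreover have "emeasure excess_part {x. fst x \<noteq> snd x} \<le> emeasure excess_part UNIV"
    using off UNIV sets_excess_part by (intro emeasure_mono) auto
  moreover note emeasure_excess_part_UNIV
  ultimately show ?thesis using emeasure_overlap_coupling[OF off] by simp
qed

end

lemma maximal_coupling:
  fixes p q :: "'a::euclidean_space \<Rightarrow> real"
  assumes p: "prob_dens p" and q: "prob_dens q"
  obtains \<gamma> where "\<gamma> \<in> couplings (density lborel (\<lambda>z. ennreal (p z))) (density lborel (\<lambda>z. ennreal (q z)))"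
    and "emeasure \<gamma> {x. fst x \<noteq> snd x} \<le> ennreal (tv_dens p q)"
proof -
  \<comment> \<open>Keep the common mass \<open>min p q\<close> on the diagonal and couple the excess masses
     \<open>(p - q)\<^sup>+\<close> and \<open>(q - p)\<^sup>+\<close>, both of total mass \<open>tv_dens p q\<close>, independently.\<close>
  define m where "m z = min (p z) (q z)" for z
  define e where "e z = max (p z - q z) 0" for z
  define g where "g z = max (q z - p z) 0" for z
  note [measurable] = prob_densD(1)[OF p] prob_densD(1)[OF q]
  have ip: "integrable lborel p" and iq: "integrable lborel q" using p q by (auto dest: prob_densD)
  have p_eq: "p = (\<lambda>z. m z + e z)" and q_eq: "q = (\<lambda>z. m z + g z)"
    by (auto simp: fun_eq_iff m_def e_def g_def)
  have ie: "integrable lborel e" and ig: "integrable lborel g"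
    unfolding e_def g_def using ip iq by (auto intro: integrable_max_diff)
  have im: "integrable lborel m" using Bochner_Integration.integrable_diff[OF ip ie] by (simp add: p_eq)
  have int_e: "(\<integral> z. e z \<partial>lborel) = tv_dens p q" and int_g: "(\<integral> z. g z \<partial>lborel) = tv_dens p q"
    using tv_dens_sym[OF p q] by (simp_all add: e_def g_def tv_dens_def)
  have int_m: "(\<integral> z. m z \<partial>lborel) = 1 - tv_dens p q"
    using prob_densD(4)[OF p] ie im int_e by (simp add: p_eq)
  have mm: "m \<in> borel_measurable lborel" and em: "e \<in> borel_measurable lborel"
    and gm: "g \<in> borel_measurable lborel"
    unfolding m_def e_def g_def by measurable
  have m0: "0 \<le> m z" and e0: "0 \<le> e z" and g0: "0 \<le> g z" for z
    using prob_densD(2)[OF p] prob_densD(2)[OF q] by (simp_all add: m_def e_def g_def)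
  show ?thesis
    using overlap_coupling_couplings[OF mm em gm m0 e0 g0 im ie ig int_m int_e int_g]
      emeasure_overlap_coupling_off_diagonal[OF mm em gm m0 e0 g0 im ie ig int_m int_e int_g]
    by (intro that) (simp_all add: p_eq q_eq)
qed

lemma W1_density_le_tv_dens:
  fixes p q :: "'a::euclidean_space \<Rightarrow> real" and d :: "'a \<Rightarrow> 'a \<Rightarrow> real"
  assumes p: "prob_dens p" and q: "prob_dens q"
    and d0: "\<And>a b. 0 \<le> d a b" and d_refl: "\<And>a. d a a = 0" and d_le: "\<And>a b. d a b \<le> D"
  shows "W1 d (density lborel (\<lambda>z. ennreal (p z))) (density lborel (\<lambda>z. ennreal (q z))) \<le> ennreal (D * tv_dens p q)"
proof -
  obtain \<gamma> where \<gamma>: "\<gamma> \<in> couplings (density lborel (\<lambda>z. ennreal (p z))) (density lborel (\<lambda>z. ennreal (q z)))"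
    and off: "emeasure \<gamma> {x. fst x \<noteq> snd x} \<le> ennreal (tv_dens p q)"
    using maximal_coupling[OF p q] .
  have sets: "sets \<gamma> = sets (borel \<Otimes>\<^sub>M borel)" using \<gamma> by (simp add: couplings_def)
  have off_sets: "{x. fst x \<noteq> snd x} \<in> sets \<gamma>"
    using off_diagonal_in_sets_pair_borel sets by simp
  have D0: "0 \<le> D" using d0 d_le order_trans by blast
  have "W1 d (density lborel (\<lambda>z. ennreal (p z))) (density lborel (\<lambda>z. ennreal (q z)))
      \<le> (\<integral>\<^sup>+ x. ennreal (d (fst x) (snd x)) \<partial>\<gamma>)"
    unfolding W1_def by (rule INF_lower[OF \<gamma>])
  also have "\<dots> \<le> (\<integral>\<^sup>+ x. ennreal D * indicator {x. fst x \<noteq> snd x} x \<partial>\<gamma>)"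
    using d_refl d_le by (intro nn_integral_mono) (auto simp: ennreal_leI split: split_indicator)
  also have "\<dots> = ennreal D * emeasure \<gamma> {x. fst x \<noteq> snd x}"
    using off_sets by (rule nn_integral_cmult_indicator)
  also have "\<dots> \<le> ennreal (D * tv_dens p q)"
    using off D0 by (simp add: ennreal_mult' mult_left_mono)
  finally show ?thesis .
qed

lemma W1_density_le_Sup_mult:
  fixes p q :: "'a::euclidean_space \<Rightarrow> real"
  assumes d: "polish_metric d" and bdd: "bdd_above (range (\<lambda>(a, b). d a b))"
    and p: "prob_dens p" and q: "prob_dens q" and R: "tv_dens p q \<le> R"
  shows "W1 d (density lborel (\<lambda>z. ennreal (p z))) (density lborel (\<lambda>z. ennreal (q z)))
    \<le> ennreal ((SUP (a, b). d a b) * R)"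
proof -
  have d0: "0 \<le> d a b" and d_refl: "d a a = 0" for a b
    using d by (simp_all add: polish_metric_def)
  have d_le: "d a b \<le> (SUP (a, b). d a b)" for a b
    using cSUP_upper[OF _ bdd, of "(a, b)"] by simp
  have "W1 d (density lborel (\<lambda>z. ennreal (p z))) (density lborel (\<lambda>z. ennreal (q z)))
      \<le> ennreal ((SUP (a, b). d a b) * tv_dens p q)"
    by (rule W1_density_le_tv_dens[OF p q d0 d_refl d_le])
  also have "\<dots> \<le> ennreal ((SUP (a, b). d a b) * R)"
    using R order_trans[OF d0 d_le] by (intro ennreal_leI mult_left_mono) auto
  finally show ?thesis .
qed

section \<open>Prediction with a Markov kernel\<close>

locale transition_densities =
  fixes T :: "nat \<Rightarrow> 'x::euclidean_space \<Rightarrow> 'x \<Rightarrow> 'w::euclidean_space \<Rightarrow> real"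
  assumes T_measurable: "\<And>i. (\<lambda>(x, x', w). T i x x' w) \<in> borel_measurable borel"
    and T_nonneg: "\<And>i x x' w. 0 \<le> T i x x' w"
    and T_normalised: "\<And>i x' w. (\<integral>\<^sup>+ x. ennreal (T i x x' w) \<partial>lborel) = 1"
begin

lemma measurable_T[measurable]:
  assumes [measurable]: "a \<in> borel_measurable M" "b \<in> borel_measurable M" "c \<in> borel_measurable M"
  shows "(\<lambda>z. T i (a z) (b z) (c z)) \<in> borel_measurable M"
proof -
  have "(\<lambda>p. T i (fst p) (fst (snd p)) (snd (snd p))) = (\<lambda>(x, x', w). T i x x' w)"
    by (auto simp: fun_eq_iff)
  then have T3: "(\<lambda>p. T i (fst p) (fst (snd p)) (snd (snd p))) \<in> borel_measurable (borel \<Otimes>\<^sub>M borel \<Otimes>\<^sub>M borel)"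
    using T_measurable[of i] by (simp add: borel_prod)
  have "(\<lambda>z. (a z, b z, c z)) \<in> measurable M (borel \<Otimes>\<^sub>M borel \<Otimes>\<^sub>M borel)" by measurable
  from measurable_compose[OF this T3] show ?thesis by simp
qed

lemma pred_measurable[measurable]:
  fixes f :: "'x \<times> 'w \<Rightarrow> real"
  assumes [measurable]: "f \<in> borel_measurable borel"
  shows "pred T i f \<in> borel_measurable borel"
proof -
  have "(\<lambda>p. ennreal (T i (fst (fst p)) (snd p) (snd (fst p)) * f (snd p, snd (fst p))))
      \<in> borel_measurable ((lborel \<Otimes>\<^sub>M lborel) \<Otimes>\<^sub>M lborel)"
    by measurable
  then have "(\<lambda>z. \<integral>\<^sup>+ x'. ennreal (T i (fst z) x' (snd z) * f (x', snd z)) \<partial>lborel) \<in> borel_measurable (lborel \<Otimes>\<^sub>M lborel)"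
    by (intro lborel.borel_measurable_nn_integral) (simp add: split_beta')
  then show ?thesis by (simp add: pred_def[abs_def] lborel_prod)
qed

lemma nn_integral_pred:
  fixes f :: "'x \<times> 'w \<Rightarrow> real"
  assumes [measurable]: "f \<in> borel_measurable borel"
  shows "(\<integral>\<^sup>+ z. pred T i f z \<partial>lborel) = (\<integral>\<^sup>+ z. ennreal (f z) \<partial>lborel)"
proof -
  define g where "g x x' w = ennreal (T i x x' w * f (x', w))" for x x' w
  have [measurable]: "(\<lambda>p. g (fst p) (snd p) w) \<in> borel_measurable (lborel \<Otimes>\<^sub>M lborel)" for w
    unfolding g_def by measurable
  have [measurable]: "(\<lambda>z. \<integral>\<^sup>+ x'. g (fst z) x' (snd z) \<partial>lborel) \<in> borel_measurable (lborel \<Otimes>\<^sub>M lborel)"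
    unfolding g_def by (rule lborel.borel_measurable_nn_integral) (simp add: split_beta')
  have g_x: "(\<integral>\<^sup>+ x. g x x' w \<partial>lborel) = ennreal (f (x', w))" for x' w
  proof -
    have "(\<integral>\<^sup>+ x. g x x' w \<partial>lborel) = (\<integral>\<^sup>+ x. ennreal (T i x x' w) * ennreal (f (x', w)) \<partial>lborel)"
      unfolding g_def using T_nonneg by (simp add: ennreal_mult')
    also have "\<dots> = ennreal (f (x', w))" by (simp add: nn_integral_multc T_normalised)
    finally show ?thesis .
  qed
  \<comment> \<open>Integrate over \<open>w\<close> last and swap the order of \<open>x\<close> and \<open>x'\<close>: the kernel integrates to one in \<open>x\<close>.\<close>
  have "(\<integral>\<^sup>+ z. pred T i f z \<partial>lborel) = (\<integral>\<^sup>+ z. (\<integral>\<^sup>+ x'. g (fst z) x' (snd z) \<partial>lborel) \<partial>(lborel \<Otimes>\<^sub>M lborel))"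
    by (simp add: lborel_prod pred_def g_def)
  also have "\<dots> = (\<integral>\<^sup>+ x. \<integral>\<^sup>+ w. (\<integral>\<^sup>+ x'. g x x' w \<partial>lborel) \<partial>lborel \<partial>lborel)"
    by (subst lborel.nn_integral_fst[symmetric]) simp_all
  also have "\<dots> = (\<integral>\<^sup>+ w. \<integral>\<^sup>+ x. (\<integral>\<^sup>+ x'. g x x' w \<partial>lborel) \<partial>lborel \<partial>lborel)"
    using lborel_pair.Fubini'[of "\<lambda>x w. \<integral>\<^sup>+ x'. g x x' w \<partial>lborel"] by (simp add: split_beta')
  also have "\<dots> = (\<integral>\<^sup>+ w. \<integral>\<^sup>+ x'. (\<integral>\<^sup>+ x. g x x' w \<partial>lborel) \<partial>lborel \<partial>lborel)"
  proof (rule nn_integral_cong)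
    fix w
    show "(\<integral>\<^sup>+ x. (\<integral>\<^sup>+ x'. g x x' w \<partial>lborel) \<partial>lborel) = (\<integral>\<^sup>+ x'. (\<integral>\<^sup>+ x. g x x' w \<partial>lborel) \<partial>lborel)"
      using lborel_pair.Fubini'[of "\<lambda>x x'. g x x' w"] by (simp add: split_beta')
  qed
  also have "\<dots> = (\<integral>\<^sup>+ w. \<integral>\<^sup>+ x'. ennreal (f (x', w)) \<partial>lborel \<partial>lborel)" by (simp add: g_x)
  also have "\<dots> = (\<integral>\<^sup>+ z. ennreal (f z) \<partial>(lborel \<Otimes>\<^sub>M lborel))"
  proof -
    have "(\<lambda>z. ennreal (f z)) \<in> borel_measurable (lborel \<Otimes>\<^sub>M lborel)" by (simp add: lborel_prod)
    then show ?thesis by (subst lborel_pair.nn_integral_snd[symmetric]) simp_all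
  qed
  also have "\<dots> = (\<integral>\<^sup>+ z. ennreal (f z) \<partial>lborel)" by (simp add: lborel_prod)
  finally show ?thesis .
qed

definition pred_density :: "nat \<Rightarrow> ('x \<times> 'w \<Rightarrow> real) \<Rightarrow> 'x \<times> 'w \<Rightarrow> real" where
  "pred_density i f z = enn2real (pred T i f z)"

lemma pred_density_measurable[measurable]:
  "f \<in> borel_measurable borel \<Longrightarrow> pred_density i f \<in> borel_measurable borel"
  unfolding pred_density_def[abs_def] by measurable

lemma pred_density_nonneg: "0 \<le> pred_density i f z"
  unfolding pred_density_def by simp

lemma ennreal_pred_density: "pred T i f z < \<infinity> \<Longrightarrow> ennreal (pred_density i f z) = pred T i f z"
  unfolding pred_density_def by (simp add: less_top[symmetric])

lemma pred_mono:
  "(\<And>z. f z \<le> g z) \<Longrightarrow> pred T i f z \<le> pred T i g z"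
  unfolding pred_def using T_nonneg by (intro nn_integral_mono ennreal_leI mult_left_mono) auto

lemma
  fixes f :: "'x \<times> 'w \<Rightarrow> real"
  assumes [measurable]: "f \<in> borel_measurable borel" and f0: "\<And>z. 0 \<le> f z" and fi: "integrable lborel f"
    and fin: "\<And>z. pred T i f z < \<infinity>"
  shows integrable_pred_density: "integrable lborel (pred_density i f)"
    and integral_pred_density: "(\<integral> z. pred_density i f z \<partial>lborel) = (\<integral> z. f z \<partial>lborel)"
proof -
  have e: "(\<integral>\<^sup>+ z. ennreal (pred_density i f z) \<partial>lborel) = ennreal (\<integral> z. f z \<partial>lborel)"
    using fin fi f0 by (simp add: ennreal_pred_density nn_integral_pred nn_integral_eq_integral)
  show "integrable lborel (pred_density i f)"
    using e by (intro integrableI_nonneg) (auto simp: pred_density_nonneg)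
  show "(\<integral> z. pred_density i f z \<partial>lborel) = (\<integral> z. f z \<partial>lborel)"
    using e f0 by (subst integral_eq_nn_integral) (auto simp: pred_density_nonneg integral_nonneg_AE)
qed

lemma prob_dens_pred_density:
  "prob_dens f \<Longrightarrow> (\<And>z. pred T i f z < \<infinity>) \<Longrightarrow> prob_dens (pred_density i f)"
  using integrable_pred_density[of f i] integral_pred_density[of f i]
  by (auto simp: prob_dens_iff_integral pred_density_nonneg)

lemma pred_density_eq_integral:
  fixes f :: "'x \<times> 'w \<Rightarrow> real"
  assumes [measurable]: "f \<in> borel_measurable borel" and f0: "\<And>z. 0 \<le> f z" and fin: "pred T i f z < \<infinity>"
  shows "integrable lborel (\<lambda>x'. T i (fst z) x' (snd z) * f (x', snd z))"
    "pred_density i f z = (\<integral> x'. T i (fst z) x' (snd z) * f (x', snd z) \<partial>lborel)"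
proof -
  have nn: "0 \<le> T i (fst z) x' (snd z) * f (x', snd z)" for x' using T_nonneg f0 by simp
  show "integrable lborel (\<lambda>x'. T i (fst z) x' (snd z) * f (x', snd z))"
    using nn fin by (intro integrableI_nonneg) (auto simp: pred_def)
  show "pred_density i f z = (\<integral> x'. T i (fst z) x' (snd z) * f (x', snd z) \<partial>lborel)"
    using nn by (subst integral_eq_nn_integral) (auto simp: pred_density_def pred_def)
qed

lemma tv_dens_pred_density_le:
  fixes \<mu> \<nu> :: "'x \<times> 'w \<Rightarrow> real"
  assumes \<mu>: "prob_dens \<mu>" and \<nu>: "prob_dens \<nu>"
    and fin_\<mu>: "\<And>z. pred T i \<mu> z < \<infinity>" and fin_\<nu>: "\<And>z. pred T i \<nu> z < \<infinity>"
  shows "tv_dens (pred_density i \<mu>) (pred_density i \<nu>) \<le> tv_dens \<mu> \<nu>"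
proof -
  have \<mu>m[measurable]: "\<mu> \<in> borel_measurable borel" and \<nu>m[measurable]: "\<nu> \<in> borel_measurable borel"
    using \<mu> \<nu> by (auto dest: prob_densD)
  have \<mu>0: "0 \<le> \<mu> z" and \<nu>0: "0 \<le> \<nu> z" for z using \<mu> \<nu> by (auto dest: prob_densD)
  define g where "g z = max (\<mu> z - \<nu> z) 0" for z
  have gm[measurable]: "g \<in> borel_measurable borel" unfolding g_def by measurable
  have g0: "0 \<le> g z" for z by (simp add: g_def)
  have gi: "integrable lborel g" unfolding g_def using \<mu> \<nu> by (intro integrable_max_diff) (auto dest: prob_densD)
  have "g z \<le> \<mu> z" for z using \<mu>0[of z] \<nu>0[of z] by (simp add: g_def)
  then have fin_g: "pred T i g z < \<infinity>" for z using pred_mono fin_\<mu> le_less_trans by blast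
  have pw: "max (pred_density i \<mu> z - pred_density i \<nu> z) 0 \<le> pred_density i g z" for z
  proof -
    note I = pred_density_eq_integral[OF \<mu>m \<mu>0 fin_\<mu>] pred_density_eq_integral[OF \<nu>m \<nu>0 fin_\<nu>]
      pred_density_eq_integral[OF gm g0 fin_g]
    have "pred_density i \<mu> z - pred_density i \<nu> z
        = (\<integral> x'. T i (fst z) x' (snd z) * \<mu> (x', snd z) - T i (fst z) x' (snd z) * \<nu> (x', snd z) \<partial>lborel)"
      using I by simp
    also have "\<dots> \<le> pred_density i g z"
    proof (unfold I(6), intro integral_mono Bochner_Integration.integrable_diff I(1,3,5))
      fix x'
      have "T i (fst z) x' (snd z) * (\<mu> (x', snd z) - \<nu> (x', snd z)) \<le> T i (fst z) x' (snd z) * g (x', snd z)"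
        using T_nonneg by (intro mult_left_mono) (auto simp: g_def)
      then show "T i (fst z) x' (snd z) * \<mu> (x', snd z) - T i (fst z) x' (snd z) * \<nu> (x', snd z)
          \<le> T i (fst z) x' (snd z) * g (x', snd z)"
        by (simp add: right_diff_distrib)
    qed
    finally show ?thesis using pred_density_nonneg[of i g z] by simp
  qed
  have "tv_dens (pred_density i \<mu>) (pred_density i \<nu>) \<le> (\<integral> z. pred_density i g z \<partial>lborel)"
    unfolding tv_dens_def using pw integrable_pred_density[OF gm g0 gi fin_g]
      prob_dens_pred_density[OF \<mu> fin_\<mu>] prob_dens_pred_density[OF \<nu> fin_\<nu>]
    by (intro integral_mono integrable_max_diff) (auto dest: prob_densD)
  also have "\<dots> = tv_dens \<mu> \<nu>" using integral_pred_density[OF gm g0 gi fin_g] by (simp add: tv_dens_def g_def)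
  finally show ?thesis .
qed

lemma pred_sqrt_mult_squared_le:
  fixes \<mu> \<nu> :: "'x \<times> 'w \<Rightarrow> real"
  assumes [measurable]: "\<mu> \<in> borel_measurable borel" "\<nu> \<in> borel_measurable borel"
    and \<mu>0: "\<And>z. 0 \<le> \<mu> z" and \<nu>0: "\<And>z. 0 \<le> \<nu> z"
  shows "(pred T i (\<lambda>z. sqrt (\<mu> z * \<nu> z)) z)\<^sup>2 \<le> pred T i \<mu> z * pred T i \<nu> z"
proof -
  define F where "F x' = ennreal (sqrt (T i (fst z) x' (snd z) * \<mu> (x', snd z)))" for x'
  define G where "G x' = ennreal (sqrt (T i (fst z) x' (snd z) * \<nu> (x', snd z)))" for x'
  have [measurable]: "F \<in> borel_measurable lborel" "G \<in> borel_measurable lborel"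
    unfolding F_def G_def by measurable
  have T0: "0 \<le> T i (fst z) x' (snd z)" for x' by (rule T_nonneg)
  have sq: "(ennreal (sqrt a))\<^sup>2 = ennreal a" if "0 \<le> a" for a
    using that by (simp add: ennreal_power)
  have "pred T i (\<lambda>z. sqrt (\<mu> z * \<nu> z)) z = (\<integral>\<^sup>+ x'. F x' * G x' \<partial>lborel)"
    unfolding pred_def F_def G_def using T0 \<mu>0 \<nu>0
    by (intro nn_integral_cong) (simp add: real_sqrt_mult ennreal_mult[symmetric] mult_ac)
  moreover have "(\<integral>\<^sup>+ x'. (F x')\<^sup>2 \<partial>lborel) = pred T i \<mu> z" "(\<integral>\<^sup>+ x'. (G x')\<^sup>2 \<partial>lborel) = pred T i \<nu> z"
    unfolding pred_def F_def G_def using T0 \<mu>0 \<nu>0 by (auto intro!: nn_integral_cong sq)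
  ultimately show ?thesis using Cauchy_Schwarz_nn_integral[of F lborel G] by simp
qed

lemma dH_pred_density_le:
  fixes \<mu> \<nu> :: "'x \<times> 'w \<Rightarrow> real"
  assumes \<mu>: "prob_dens \<mu>" and \<nu>: "prob_dens \<nu>"
    and fin_\<mu>: "\<And>z. pred T i \<mu> z < \<infinity>" and fin_\<nu>: "\<And>z. pred T i \<nu> z < \<infinity>"
  shows "dH (pred_density i \<mu>) (pred_density i \<nu>) \<le> dH \<mu> \<nu>"
proof -
  have [measurable]: "\<mu> \<in> borel_measurable borel" "\<nu> \<in> borel_measurable borel"
    using \<mu> \<nu> by (auto dest: prob_densD)
  have \<mu>0: "0 \<le> \<mu> z" and \<nu>0: "0 \<le> \<nu> z" for z using \<mu> \<nu> by (auto dest: prob_densD)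
  define g where "g z = sqrt (\<mu> z * \<nu> z)" for z
  have gm[measurable]: "g \<in> borel_measurable borel" unfolding g_def by measurable
  have g0: "0 \<le> g z" for z using \<mu>0[of z] \<nu>0[of z] by (simp add: g_def)
  have gi: "integrable lborel g" unfolding g_def by (rule integrable_sqrt_mult_prob_dens[OF \<mu> \<nu>])
  have cs: "(pred T i g z)\<^sup>2 \<le> pred T i \<mu> z * pred T i \<nu> z" for z
    unfolding g_def by (rule pred_sqrt_mult_squared_le) (use \<mu>0 \<nu>0 in auto)
  have fin_g: "pred T i g z < \<infinity>" for z
  proof -
    have "pred T i \<mu> z * pred T i \<nu> z < \<infinity>" using fin_\<mu>[of z] fin_\<nu>[of z] by (simp add: ennreal_mult_less_top)
    then have "(pred T i g z)\<^sup>2 < \<infinity>" using cs[of z] by (rule le_less_trans[rotated])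
    then show ?thesis by (simp add: power_less_top_ennreal)
  qed
  have pw: "pred_density i g z \<le> sqrt (pred_density i \<mu> z * pred_density i \<nu> z)" for z
  proof -
    have "enn2real ((pred T i g z)\<^sup>2) \<le> enn2real (pred T i \<mu> z * pred T i \<nu> z)"
      using cs[of z] fin_\<mu>[of z] fin_\<nu>[of z] by (intro enn2real_mono) (auto simp: ennreal_mult_less_top)
    then have "(pred_density i g z)\<^sup>2 \<le> pred_density i \<mu> z * pred_density i \<nu> z"
      by (simp add: pred_density_def power2_eq_square enn2real_mult)
    then show ?thesis by (simp add: real_le_rsqrt)
  qed
  note pd = prob_dens_pred_density[OF \<mu> fin_\<mu>] prob_dens_pred_density[OF \<nu> fin_\<nu>]
  \<comment> \<open>The Bhattacharyya coefficient \<open>\<integral> \<surd>(\<mu> \<nu>)\<close> can only grow under the kernel.\<close>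
  have "(\<integral> z. g z \<partial>lborel) \<le> (\<integral> z. sqrt (pred_density i \<mu> z * pred_density i \<nu> z) \<partial>lborel)"
    using pw integrable_pred_density[OF gm g0 gi fin_g] integrable_sqrt_mult_prob_dens[OF pd]
    by (subst integral_pred_density[OF _ g0 gi fin_g, symmetric]) (auto intro: integral_mono)
  then show ?thesis
    unfolding dH_def g_def using integral_sqrt_diff_square[OF pd] integral_sqrt_diff_square[OF \<mu> \<nu>]
    by (intro real_sqrt_le_mono) simp
qed

end

section \<open>Error propagation in the Gaussian filter\<close>

lemma pos_def_mat_inverse_quadratic_nonneg:
  fixes G :: "real^'r^'r"
  assumes pd: "pos_def_mat G" and det: "det G \<noteq> 0"
  shows "0 \<le> v \<bullet> (matrix_inv G *v v)"
proof -
  have "invertible G" using det by (simp add: invertible_det_nz)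
  then have inv: "G ** matrix_inv G = mat 1"
    unfolding invertible_def matrix_inv_def by (rule someI_ex[THEN conjunct1])
  define u where "u = matrix_inv G *v v"
  have Gu: "G *v u = v" unfolding u_def by (simp add: matrix_vector_mul_assoc inv)
  have "0 \<le> u \<bullet> (G *v u)"
    using pd unfolding pos_def_mat_def by (cases "u = 0") (auto intro: less_imp_le)
  then show ?thesis using Gu by (simp add: u_def[symmetric] inner_commute)
qed

lemma admissible_det_nonzero:
  assumes "admissible T \<Phi> \<Gamma> y i \<pi>"
  shows "det \<Gamma> \<noteq> 0"
proof
  assume "det \<Gamma> = 0"
  then have "lik \<Phi> \<Gamma> y i z = 0" for z by (simp add: lik_def gauss_dens_def)
  then have "evid T \<Phi> \<Gamma> y i \<pi> = 0" by (simp add: evid_def)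
  with assms show False by (simp add: admissible_def)
qed

lemma iterated_map_error_bound:
  fixes P Q :: "nat \<Rightarrow> 'a" and F :: "nat \<Rightarrow> 'a \<Rightarrow> 'a" and dist :: "'a \<Rightarrow> 'a \<Rightarrow> real"
    and L c :: "nat \<Rightarrow> real"
  assumes start: "dist (P 0) (Q 0) = 0"
    and triangle: "\<And>m. m < k \<Longrightarrow>
      dist (P (Suc m)) (Q (Suc m)) \<le> dist (F (Suc m) (P m)) (F (Suc m) (Q m)) + dist (F (Suc m) (Q m)) (Q (Suc m))"
    and lipschitz: "\<And>m. m < k \<Longrightarrow> dist (F (Suc m) (P m)) (F (Suc m) (Q m)) \<le> L (Suc m) * dist (P m) (Q m)"
    and local_error: "\<And>m. m < k \<Longrightarrow> dist (F (Suc m) (Q m)) (Q (Suc m)) \<le> c (Suc m)"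
    and L0: "\<And>i. 0 \<le> L i"
  shows "dist (P k) (Q k) \<le> (\<Sum>j=1..k. (\<Prod>i=j+1..k. L i) * c j)"
proof -
  have "n \<le> k \<Longrightarrow> dist (P n) (Q n) \<le> (\<Sum>j=1..n. (\<Prod>i=j+1..n. L i) * c j)" for n
  proof (induction n)
    case 0
    then show ?case using start by simp
  next
    case (Suc n)
    then have n: "n < k" by simp
    have "dist (P (Suc n)) (Q (Suc n)) \<le> L (Suc n) * dist (P n) (Q n) + c (Suc n)"
      using triangle[OF n] lipschitz[OF n] local_error[OF n] by linarith
    also have "\<dots> \<le> L (Suc n) * (\<Sum>j=1..n. (\<Prod>i=j+1..n. L i) * c j) + c (Suc n)"
      using Suc L0 by (intro add_right_mono mult_left_mono) auto
    also have "L (Suc n) * (\<Sum>j=1..n. (\<Prod>i=j+1..n. L i) * c j) = (\<Sum>j=1..n. (\<Prod>i=j+1..Suc n. L i) * c j)"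
      unfolding sum_distrib_left by (intro sum.cong refl) (simp add: prod.cl_ivl_Suc)
    also have "(\<Sum>j=1..n. (\<Prod>i=j+1..Suc n. L i) * c j) + c (Suc n) = (\<Sum>j=1..Suc n. (\<Prod>i=j+1..Suc n. L i) * c j)"
      by simp
    finally show ?case .
  qed
  then show ?thesis by simp
qed

lemma real_sqrt_prod: "sqrt (prod f A) = (\<Prod>i\<in>A. sqrt (f i))"
  by (induction A rule: infinite_finite_induct) (simp_all add: real_sqrt_mult)

lemma sqrt_powr: "(x::real) \<noteq> 0 \<Longrightarrow> sqrt (x powr c) = x powr (c / 2)"
  using real_sqrt_unique[of "x powr (c / 2)" "x powr c"] by (simp add: powr_power)

locale gaussian_filter = transition_densities T
  for T :: "nat \<Rightarrow> 'x::euclidean_space \<Rightarrow> 'x \<Rightarrow> 'w::euclidean_space \<Rightarrow> real" +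
  fixes \<Phi> :: "nat \<Rightarrow> 'x \<Rightarrow> 'w \<Rightarrow> real^'r" and \<Gamma> :: "real^'r^'r" and y :: "nat \<Rightarrow> real^'r"
  assumes \<Phi>_measurable: "\<And>i. (\<lambda>(x, w). \<Phi> i x w) \<in> borel_measurable borel"
    and \<Gamma>_pos_def: "pos_def_mat \<Gamma>" and det_\<Gamma>: "det \<Gamma> \<noteq> 0"
begin

abbreviation likelihood :: "nat \<Rightarrow> 'x \<times> 'w \<Rightarrow> real" where
  "likelihood i \<equiv> lik \<Phi> \<Gamma> y i"

abbreviation post :: "nat \<Rightarrow> ('x \<times> 'w \<Rightarrow> real) \<Rightarrow> 'x \<times> 'w \<Rightarrow> real" where
  "post i \<pi> \<equiv> post_op T \<Phi> \<Gamma> y i \<pi>"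

definition lik_max :: real where
  "lik_max = (2 * pi) powr (- real CARD('r) / 2) * det \<Gamma> powr (- 1 / 2)"

definition evidence :: "nat \<Rightarrow> ('x \<times> 'w \<Rightarrow> real) \<Rightarrow> real" where
  "evidence i \<pi> = enn2real (evid T \<Phi> \<Gamma> y i \<pi>)"

lemma lik_max_pos: "0 < lik_max"
  unfolding lik_max_def using det_\<Gamma> by simp

lemma ln_lik_max: "ln lik_max = - (real CARD('r) / 2) * ln (2 * pi) - 1 / 2 * ln (det \<Gamma>)"
  unfolding lik_max_def using det_\<Gamma> by (simp add: ln_mult)

lemma likelihood_measurable[measurable]: "likelihood i \<in> borel_measurable borel"
proof -
  have [measurable]: "(\<lambda>z. \<Phi> i (fst z) (snd z)) \<in> borel_measurable borel"
    using \<Phi>_measurable[of i] by (simp add: split_beta')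
  have "continuous_on UNIV (\<lambda>v::real^'r. v \<bullet> (matrix_inv \<Gamma> *v v))"
    by (intro continuous_intros linear_continuous_on matrix_vector_mul_linear_gen)
  then have [measurable]: "(\<lambda>v::real^'r. v \<bullet> (matrix_inv \<Gamma> *v v)) \<in> borel_measurable borel"
    by (rule borel_measurable_continuous_onI)
  show ?thesis unfolding lik_def[abs_def] gauss_dens_def by measurable
qed

lemma likelihood_pos: "0 < likelihood i z"
  unfolding lik_def gauss_dens_def using det_\<Gamma> by simp

lemma likelihood_nonneg: "0 \<le> likelihood i z"
  using likelihood_pos less_imp_le by blast

lemma likelihood_le_lik_max: "likelihood i z \<le> lik_max"
proof -
  have "0 \<le> (y i - \<Phi> i (fst z) (snd z)) \<bullet> (matrix_inv \<Gamma> *v (y i - \<Phi> i (fst z) (snd z)))"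
    by (rule pos_def_mat_inverse_quadratic_nonneg[OF \<Gamma>_pos_def det_\<Gamma>])
  then show ?thesis
    unfolding lik_def gauss_dens_def lik_max_def using lik_max_pos[unfolded lik_max_def]
    by (simp add: mult_left_le)
qed

lemma post_op_eq_Bayes: "post i \<pi> = (\<lambda>z. likelihood i z * pred_density i \<pi> z / evidence i \<pi>)"
  by (simp add: fun_eq_iff post_op_def pred_density_def evidence_def)

lemma admissible_prob_dens: "admissible T \<Phi> \<Gamma> y i \<pi> \<Longrightarrow> prob_dens \<pi>"
  by (simp add: admissible_def)

lemma admissible_pred_finite: "admissible T \<Phi> \<Gamma> y i \<pi> \<Longrightarrow> pred T i \<pi> z < \<infinity>"
  by (cases z) (simp add: admissible_def)

lemma admissible_prob_dens_pred_density:
  assumes "admissible T \<Phi> \<Gamma> y i \<pi>"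
  shows "prob_dens (pred_density i \<pi>)"
  using prob_dens_pred_density[OF admissible_prob_dens[OF assms] admissible_pred_finite[OF assms]] .

lemma
  assumes adm: "admissible T \<Phi> \<Gamma> y i \<pi>"
  shows evidence_eq_integral: "evidence i \<pi> = (\<integral> z. likelihood i z * pred_density i \<pi> z \<partial>lborel)"
    and evidence_pos: "0 < evidence i \<pi>"
    and evidence_le_lik_max: "evidence i \<pi> \<le> lik_max"
proof -
  note pd = admissible_prob_dens_pred_density[OF adm]
  have i: "integrable lborel (\<lambda>z. likelihood i z * pred_density i \<pi> z)"
    using likelihood_nonneg likelihood_le_lik_max prob_densD(3)[OF pd]
    by (intro integrable_bounded_mult) auto
  have "evid T \<Phi> \<Gamma> y i \<pi> = (\<integral>\<^sup>+ z. ennreal (likelihood i z * pred_density i \<pi> z) \<partial>lborel)"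
    unfolding evid_def using likelihood_pos
    by (intro nn_integral_cong)
      (simp add: ennreal_mult likelihood_nonneg pred_density_nonneg ennreal_pred_density[OF admissible_pred_finite[OF adm]])
  also have "\<dots> = ennreal (\<integral> z. likelihood i z * pred_density i \<pi> z \<partial>lborel)"
    using i likelihood_pos by (intro nn_integral_eq_integral) (auto simp: pred_density_nonneg less_imp_le)
  finally have ev: "evid T \<Phi> \<Gamma> y i \<pi> = ennreal (\<integral> z. likelihood i z * pred_density i \<pi> z \<partial>lborel)" .
  moreover have "0 \<le> (\<integral> z. likelihood i z * pred_density i \<pi> z \<partial>lborel)"
    using likelihood_pos by (intro integral_nonneg_AE) (auto simp: pred_density_nonneg less_imp_le)
  ultimately show Z: "evidence i \<pi> = (\<integral> z. likelihood i z * pred_density i \<pi> z \<partial>lborel)"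
    by (simp add: evidence_def)
  show "0 < evidence i \<pi>" using adm ev Z by (simp add: admissible_def)
  have "(\<integral> z. likelihood i z * pred_density i \<pi> z \<partial>lborel) \<le> (\<integral> z. lik_max * pred_density i \<pi> z \<partial>lborel)"
    using i prob_densD(3)[OF pd] likelihood_le_lik_max
    by (intro integral_mono) (auto intro: mult_right_mono simp: pred_density_nonneg)
  then show "evidence i \<pi> \<le> lik_max" using Z prob_densD(4)[OF pd] by simp
qed

lemma prob_dens_post_op: "admissible T \<Phi> \<Gamma> y i \<pi> \<Longrightarrow> prob_dens (post i \<pi>)"
  unfolding post_op_eq_Bayes
  by (rule prob_dens_Bayes[OF _ _ likelihood_le_lik_max admissible_prob_dens_pred_density evidence_eq_integral evidence_pos])
    (auto simp: likelihood_nonneg)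

lemma tv_dens_post_op_le:
  assumes \<mu>: "admissible T \<Phi> \<Gamma> y i \<mu>" and \<nu>: "admissible T \<Phi> \<Gamma> y i \<nu>"
  shows "tv_dens (post i \<mu>) (post i \<nu>) \<le> lik_max / evidence i \<mu> * tv_dens \<mu> \<nu>"
proof -
  have "tv_dens (post i \<mu>) (post i \<nu>) \<le> lik_max / evidence i \<mu> * tv_dens (pred_density i \<mu>) (pred_density i \<nu>)"
    unfolding post_op_eq_Bayes
    by (rule tv_dens_Bayes_le[OF _ _ likelihood_le_lik_max admissible_prob_dens_pred_density[OF \<mu>]
          admissible_prob_dens_pred_density[OF \<nu>] evidence_eq_integral[OF \<mu>] evidence_pos[OF \<mu>]
          evidence_eq_integral[OF \<nu>] evidence_pos[OF \<nu>]])
      (auto simp: likelihood_nonneg)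
  also have "\<dots> \<le> lik_max / evidence i \<mu> * tv_dens \<mu> \<nu>"
    using tv_dens_pred_density_le[OF admissible_prob_dens[OF \<mu>] admissible_prob_dens[OF \<nu>]
        admissible_pred_finite[OF \<mu>] admissible_pred_finite[OF \<nu>]]
      lik_max_pos evidence_pos[OF \<mu>]
    by (intro mult_left_mono) auto
  finally show ?thesis .
qed

lemma dH_post_op_le:
  assumes \<mu>: "admissible T \<Phi> \<Gamma> y i \<mu>" and \<nu>: "admissible T \<Phi> \<Gamma> y i \<nu>"
  shows "dH (post i \<mu>) (post i \<nu>) \<le> 2 * sqrt (lik_max / evidence i \<mu>) * dH \<mu> \<nu>"
proof -
  have "dH (post i \<mu>) (post i \<nu>) \<le> 2 * sqrt (lik_max / evidence i \<mu>) * dH (pred_density i \<mu>) (pred_density i \<nu>)"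
    unfolding post_op_eq_Bayes
    by (rule dH_Bayes_le[OF _ _ likelihood_le_lik_max admissible_prob_dens_pred_density[OF \<mu>]
          admissible_prob_dens_pred_density[OF \<nu>] evidence_eq_integral[OF \<mu>] evidence_pos[OF \<mu>]
          evidence_eq_integral[OF \<nu>] evidence_pos[OF \<nu>]])
      (auto simp: likelihood_nonneg)
  also have "\<dots> \<le> 2 * sqrt (lik_max / evidence i \<mu>) * dH \<mu> \<nu>"
    using dH_pred_density_le[OF admissible_prob_dens[OF \<mu>] admissible_prob_dens[OF \<nu>]
        admissible_pred_finite[OF \<mu>] admissible_pred_finite[OF \<nu>]]
      lik_max_pos evidence_pos[OF \<mu>]
    by (intro mult_left_mono) auto
  finally show ?thesis .
qed

lemma tv_dens_post_op_le':
  assumes \<mu>: "admissible T \<Phi> \<Gamma> y i \<mu>" and \<nu>: "admissible T \<Phi> \<Gamma> y i \<nu>"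
  shows "tv_dens (post i \<mu>) (post i \<nu>) \<le> lik_max / evidence i \<nu> * tv_dens \<mu> \<nu>"
  using tv_dens_post_op_le[OF \<nu> \<mu>] tv_dens_sym[OF prob_dens_post_op[OF \<mu>] prob_dens_post_op[OF \<nu>]]
    tv_dens_sym[OF admissible_prob_dens[OF \<mu>] admissible_prob_dens[OF \<nu>]]
  by simp

lemma dH_post_op_le':
  assumes \<mu>: "admissible T \<Phi> \<Gamma> y i \<mu>" and \<nu>: "admissible T \<Phi> \<Gamma> y i \<nu>"
  shows "dH (post i \<mu>) (post i \<nu>) \<le> 2 * sqrt (lik_max / evidence i \<nu>) * dH \<mu> \<nu>"
  using dH_post_op_le[OF \<nu> \<mu>] dH_sym[of "post i \<mu>"] dH_sym[of \<mu>] by simp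

lemma ELBO_post_op_bounds:
  assumes adm: "admissible T \<Phi> \<Gamma> y (Suc m) (q m)" and q: "prob_dens (q (Suc m))"
    and elbo: "elbo_ge T \<Phi> \<Gamma> y q (Suc m) \<epsilon>"
  shows "tv_dens (post (Suc m) (q m)) (q (Suc m)) \<le> sqrt (ln lik_max - \<epsilon>) / sqrt 2"
    and "dH (post (Suc m) (q m)) (q (Suc m)) \<le> sqrt (ln lik_max - \<epsilon>) / sqrt 2"
proof -
  let ?a = "pred_density (Suc m) (q m)" and ?Z = "evidence (Suc m) (q m)"
  let ?r = "post (Suc m) (q m)" and ?KL = "\<lambda>z. q (Suc m) z * ln (q (Suc m) z / post (Suc m) (q m) z)"
  define E where "E = (\<integral> z. q (Suc m) z * ln (likelihood (Suc m) z * ?a z) \<partial>lborel)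
      - (\<integral> z. q (Suc m) z * ln (q (Suc m) z) \<partial>lborel)"
  have ae: "AE z in lborel. 0 < q (Suc m) z \<longrightarrow> 0 < ?a z"
    and i1: "integrable lborel (\<lambda>z. q (Suc m) z * ln (likelihood (Suc m) z * ?a z))"
    and i2: "integrable lborel (\<lambda>z. q (Suc m) z * ln (q (Suc m) z))" and E: "\<epsilon> \<le> E"
    using elbo unfolding elbo_ge_def E_def pred_density_def
    by (auto elim!: eventually_mono simp: enn2real_positive_iff)
  have a[measurable]: "?a \<in> borel_measurable lborel"
    using prob_densD(1)[OF admissible_prob_dens_pred_density[OF adm]] .
  have "?KL = (\<lambda>z. q (Suc m) z * ln (q (Suc m) z / (likelihood (Suc m) z * ?a z / ?Z)))"
    by (simp add: post_op_eq_Bayes)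
  note KL = KL_Bayes_eq_log_evidence_minus_ELBO[OF q _ a likelihood_pos evidence_pos[OF adm] ae i1 i2,
      folded this E_def]
  have ae_r: "AE z in lborel. 0 < q (Suc m) z \<longrightarrow> 0 < ?r z"
    using ae by eventually_elim (use likelihood_pos evidence_pos[OF adm] in \<open>simp add: post_op_eq_Bayes\<close>)
  have "ln ?Z \<le> ln lik_max" using evidence_pos[OF adm] evidence_le_lik_max[OF adm] by simp
  then have KL_le: "(\<integral> z. ?KL z \<partial>lborel) \<le> ln lik_max - \<epsilon>" using KL(2) E by simp
  have "2 * (tv_dens (q (Suc m)) ?r)\<^sup>2 \<le> ln lik_max - \<epsilon>"
    using Pinsker_tv_dens[OF q prob_dens_post_op[OF adm] ae_r KL(1)] KL_le by simp
  then show "tv_dens ?r (q (Suc m)) \<le> sqrt (ln lik_max - \<epsilon>) / sqrt 2"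
    using tv_dens_nonneg tv_dens_sym[OF q prob_dens_post_op[OF adm]]
    by (simp add: real_le_rsqrt real_sqrt_divide[symmetric])
  have "(\<integral> z. (sqrt (q (Suc m) z) - sqrt (?r z))\<^sup>2 \<partial>lborel) \<le> ln lik_max - \<epsilon>"
    using Hellinger_le_KL[OF q prob_dens_post_op[OF adm] ae_r KL(1)] KL_le by simp
  then have "dH (q (Suc m)) ?r \<le> sqrt ((ln lik_max - \<epsilon>) / 2)"
    unfolding dH_def by (intro real_sqrt_le_mono) simp
  then show "dH ?r (q (Suc m)) \<le> sqrt (ln lik_max - \<epsilon>) / sqrt 2"
    by (simp add: dH_sym real_sqrt_divide)
qed


lemma exact_post_error_bounds:
  fixes q :: "nat \<Rightarrow> 'x \<times> 'w \<Rightarrow> real" and \<epsilon> :: "nat \<Rightarrow> real" and k :: nat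
  defines "P \<equiv> exact_post T \<Phi> \<Gamma> y (q 0)"
  assumes Q_dens: "\<forall>i\<in>{1..k}. prob_dens (q i)"
    and elbo: "\<forall>i\<in>{1..k}. elbo_ge T \<Phi> \<Gamma> y q i (\<epsilon> i)"
    and P_adm: "\<forall>i<k. admissible T \<Phi> \<Gamma> y (Suc i) (P i)"
    and Q_adm: "\<forall>i\<in>{1..<k}. admissible T \<Phi> \<Gamma> y (Suc i) (q i)"
  shows "tv_dens (P k) (q k)
      \<le> (\<Sum>j=1..k. (\<Prod>i=j+1..k. lik_max / evidence i (P (i - 1))) * (sqrt (ln lik_max - \<epsilon> j) / sqrt 2))"
    and "tv_dens (P k) (q k)
      \<le> (\<Sum>j=1..k. (\<Prod>i=j+1..k. lik_max / evidence i (q (i - 1))) * (sqrt (ln lik_max - \<epsilon> j) / sqrt 2))"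
    and "dH (P k) (q k)
      \<le> (\<Sum>j=1..k. (\<Prod>i=j+1..k. 2 * sqrt (lik_max / evidence i (P (i - 1)))) * (sqrt (ln lik_max - \<epsilon> j) / sqrt 2))"
    and "dH (P k) (q k)
      \<le> (\<Sum>j=1..k. (\<Prod>i=j+1..k. 2 * sqrt (lik_max / evidence i (q (i - 1)))) * (sqrt (ln lik_max - \<epsilon> j) / sqrt 2))"
proof -
  have P_0: "P 0 = q 0" and P_Suc: "P (Suc m) = post (Suc m) (P m)" for m by (simp_all add: P_def)
  have PA: "admissible T \<Phi> \<Gamma> y (Suc m) (P m)" if "m < k" for m using P_adm that by auto
  have QA: "admissible T \<Phi> \<Gamma> y (Suc m) (q m)" if "m < k" for m
    using that P_adm Q_adm P_0 by (cases m) auto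
  have dens: "prob_dens (P (Suc m))" "prob_dens (q (Suc m))" "prob_dens (post (Suc m) (q m))" if "m < k" for m
    using prob_dens_post_op[OF PA[OF that]] Q_dens prob_dens_post_op[OF QA[OF that]] that
    by (auto simp: P_Suc)
  have variational_error: "tv_dens (post (Suc m) (q m)) (q (Suc m)) \<le> sqrt (ln lik_max - \<epsilon> (Suc m)) / sqrt 2"
    "dH (post (Suc m) (q m)) (q (Suc m)) \<le> sqrt (ln lik_max - \<epsilon> (Suc m)) / sqrt 2" if "m < k" for m
    using ELBO_post_op_bounds[where q = q and m = m, OF QA[OF that]] Q_dens elbo that by auto
  have evidence_nonneg: "0 \<le> evidence i \<pi>" for i \<pi> by (simp add: evidence_def)
  have tv_triangle: "tv_dens (P (Suc m)) (q (Suc m))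
      \<le> tv_dens (post (Suc m) (P m)) (post (Suc m) (q m)) + tv_dens (post (Suc m) (q m)) (q (Suc m))"
    if "m < k" for m
    using tv_dens_triangle dens[OF that] unfolding P_Suc by (auto dest: prob_densD)
  have dH_triangle: "dH (P (Suc m)) (q (Suc m))
      \<le> dH (post (Suc m) (P m)) (post (Suc m) (q m)) + dH (post (Suc m) (q m)) (q (Suc m))"
    if "m < k" for m
    using dH_triangle dens[OF that] unfolding P_Suc by blast
  have L0: "0 \<le> lik_max / evidence i \<pi>" "0 \<le> 2 * sqrt (lik_max / evidence i \<pi>)" for i \<pi>
    using lik_max_pos evidence_nonneg[of i \<pi>] by simp_all
  have start: "tv_dens (P 0) (q 0) = 0" "dH (P 0) (q 0) = 0" by (simp_all add: P_0 tv_dens_self dH_def)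
  show "tv_dens (P k) (q k)
      \<le> (\<Sum>j=1..k. (\<Prod>i=j+1..k. lik_max / evidence i (P (i - 1))) * (sqrt (ln lik_max - \<epsilon> j) / sqrt 2))"
    by (rule iterated_map_error_bound[where F = post, OF start(1) tv_triangle])
      (use tv_dens_post_op_le[OF PA QA] variational_error L0 in simp_all)
  show "tv_dens (P k) (q k)
      \<le> (\<Sum>j=1..k. (\<Prod>i=j+1..k. lik_max / evidence i (q (i - 1))) * (sqrt (ln lik_max - \<epsilon> j) / sqrt 2))"
    by (rule iterated_map_error_bound[where F = post, OF start(1) tv_triangle])
      (use tv_dens_post_op_le'[OF PA QA] variational_error L0 in simp_all)
  show "dH (P k) (q k)
      \<le> (\<Sum>j=1..k. (\<Prod>i=j+1..k. 2 * sqrt (lik_max / evidence i (P (i - 1)))) * (sqrt (ln lik_max - \<epsilon> j) / sqrt 2))"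
    by (rule iterated_map_error_bound[where F = post, OF start(2) dH_triangle])
      (use dH_post_op_le[OF PA QA] variational_error L0 in simp_all)
  show "dH (P k) (q k)
      \<le> (\<Sum>j=1..k. (\<Prod>i=j+1..k. 2 * sqrt (lik_max / evidence i (q (i - 1)))) * (sqrt (ln lik_max - \<epsilon> j) / sqrt 2))"
    by (rule iterated_map_error_bound[where F = post, OF start(2) dH_triangle])
      (use dH_post_op_le'[OF PA QA] variational_error L0 in simp_all)
qed

lemma lik_max_power:
  "lik_max ^ n = (2 * pi) powr (- (real CARD('r) * real n) / 2) * det \<Gamma> powr (- real n / 2)"
  unfolding lik_max_def using det_\<Gamma> by (simp add: power_mult_distrib powr_power algebra_simps)

lemma sqrt_lik_max_power:
  "sqrt lik_max ^ n = (2 * pi) powr (- (real CARD('r) * real n) / 4) * det \<Gamma> powr (- real n / 4)"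
  unfolding lik_max_def using det_\<Gamma>
  by (simp add: real_sqrt_mult sqrt_powr power_mult_distrib powr_power algebra_simps)

lemma tv_bound_closed_form:
  fixes Z s :: "nat \<Rightarrow> real"
  assumes k: "1 \<le> k"
  shows "(\<Sum>j=1..k. (\<Prod>i=j+1..k. lik_max / Z i) * (s j / sqrt 2))
    = (\<Sum>j=1..<k. (2 * pi) powr (- (real CARD('r) * real (k - j)) / 2) * det \<Gamma> powr (- real (k - j) / 2)
          / (sqrt 2 * (\<Prod>i\<in>{j+1..k}. Z i)) * s j) + 1 / sqrt 2 * s k"
proof -
  have "(\<Prod>i=j+1..k. lik_max / Z i) * (s j / sqrt 2)
      = (2 * pi) powr (- (real CARD('r) * real (k - j)) / 2) * det \<Gamma> powr (- real (k - j) / 2)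
          / (sqrt 2 * (\<Prod>i\<in>{j+1..k}. Z i)) * s j" for j
    unfolding lik_max_power[symmetric] by (simp add: prod_dividef)
  then have "(\<Sum>j=1..<k. (\<Prod>i=j+1..k. lik_max / Z i) * (s j / sqrt 2))
    = (\<Sum>j=1..<k. (2 * pi) powr (- (real CARD('r) * real (k - j)) / 2) * det \<Gamma> powr (- real (k - j) / 2)
          / (sqrt 2 * (\<Prod>i\<in>{j+1..k}. Z i)) * s j)"
    by (intro sum.cong refl)
  then show ?thesis using sum.last_plus[OF k, of "\<lambda>j. (\<Prod>i=j+1..k. lik_max / Z i) * (s j / sqrt 2)"] by simp
qed

lemma dH_bound_closed_form:
  fixes Z s :: "nat \<Rightarrow> real"
  assumes k: "1 \<le> k"
  shows "(\<Sum>j=1..k. (\<Prod>i=j+1..k. 2 * sqrt (lik_max / Z i)) * (s j / sqrt 2))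
    = (\<Sum>j=1..<k. 2 ^ (k - j) * (2 * pi) powr (- (real CARD('r) * real (k - j)) / 4) * det \<Gamma> powr (- real (k - j) / 4)
          / (sqrt 2 * (\<Prod>i\<in>{j+1..k}. sqrt (Z i))) * s j) + 1 / sqrt 2 * s k"
    and "(\<Sum>j=1..k. (\<Prod>i=j+1..k. 2 * sqrt (lik_max / Z i)) * (s j / sqrt 2))
    = (\<Sum>j=1..<k. 2 ^ (k - j) * (2 * pi) powr (- (real CARD('r) * real (k - j)) / 4) * det \<Gamma> powr (- real (k - j) / 4)
          / sqrt (2 * (\<Prod>i\<in>{j+1..k}. Z i)) * s j) + 1 / sqrt 2 * s k"
proof -
  have "(\<Prod>i=j+1..k. 2 * sqrt (lik_max / Z i)) * (s j / sqrt 2)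
      = 2 ^ (k - j) * sqrt lik_max ^ (k - j) / (sqrt 2 * (\<Prod>i\<in>{j+1..k}. sqrt (Z i))) * s j" for j
    by (simp add: prod.distrib prod_dividef real_sqrt_divide)
  note eq = this
  have "2 ^ (k - j) * sqrt lik_max ^ (k - j) = 2 ^ (k - j) * (2 * pi) powr (- (real CARD('r) * real (k - j)) / 4)
      * det \<Gamma> powr (- real (k - j) / 4)" for j
    by (simp only: sqrt_lik_max_power mult.assoc)
  note eq = eq[unfolded this]
  have "(\<Sum>j=1..<k. (\<Prod>i=j+1..k. 2 * sqrt (lik_max / Z i)) * (s j / sqrt 2))
    = (\<Sum>j=1..<k. 2 ^ (k - j) * (2 * pi) powr (- (real CARD('r) * real (k - j)) / 4) * det \<Gamma> powr (- real (k - j) / 4)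
          / (sqrt 2 * (\<Prod>i\<in>{j+1..k}. sqrt (Z i))) * s j)"
    using eq by (intro sum.cong refl)
  then show "(\<Sum>j=1..k. (\<Prod>i=j+1..k. 2 * sqrt (lik_max / Z i)) * (s j / sqrt 2))
    = (\<Sum>j=1..<k. 2 ^ (k - j) * (2 * pi) powr (- (real CARD('r) * real (k - j)) / 4) * det \<Gamma> powr (- real (k - j) / 4)
          / (sqrt 2 * (\<Prod>i\<in>{j+1..k}. sqrt (Z i))) * s j) + 1 / sqrt 2 * s k"
    using sum.last_plus[OF k, of "\<lambda>j. (\<Prod>i=j+1..k. 2 * sqrt (lik_max / Z i)) * (s j / sqrt 2)"] by simp
  moreover have "sqrt (2 * (\<Prod>i\<in>{j+1..k}. Z i)) = sqrt 2 * (\<Prod>i\<in>{j+1..k}. sqrt (Z i))" for j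
    by (simp add: real_sqrt_mult real_sqrt_prod)
  ultimately show "(\<Sum>j=1..k. (\<Prod>i=j+1..k. 2 * sqrt (lik_max / Z i)) * (s j / sqrt 2))
    = (\<Sum>j=1..<k. 2 ^ (k - j) * (2 * pi) powr (- (real CARD('r) * real (k - j)) / 4) * det \<Gamma> powr (- real (k - j) / 4)
          / sqrt (2 * (\<Prod>i\<in>{j+1..k}. Z i)) * s j) + 1 / sqrt 2 * s k"
    by simp
qed

end

theorem corollary1:
  fixes T :: "nat \<Rightarrow> 'x::euclidean_space \<Rightarrow> 'x \<Rightarrow> 'w::euclidean_space \<Rightarrow> real"
    and \<Phi> :: "nat \<Rightarrow> 'x \<Rightarrow> 'w \<Rightarrow> real^'r"
    and \<Gamma> :: "real^'r^'r"
    and y :: "nat \<Rightarrow> real^'r"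
    and q :: "nat \<Rightarrow> 'x \<times> 'w \<Rightarrow> real"
    and \<epsilon> :: "nat \<Rightarrow> real"
    and k :: nat
    and d :: "'x \<times> 'w \<Rightarrow> 'x \<times> 'w \<Rightarrow> real"
  assumes T_meas: "\<forall>i. (\<lambda>(x, x', w). T i x x' w) \<in> borel_measurable borel"
    and T_nonneg: "\<forall>i x x' w. 0 \<le> T i x x' w"
    and T_dens: "\<forall>i x' w. (\<integral>\<^sup>+ x. ennreal (T i x x' w) \<partial>lborel) = 1"
    and \<Phi>_meas: "\<forall>i. (\<lambda>(x, w). \<Phi> i x w) \<in> borel_measurable borel"
    and \<Gamma>_pd: "pos_def_mat \<Gamma>"
    and d_polish: "polish_metric d"
    and k_pos: "1 \<le> k"
    and P0: "prob_dens (q 0)"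
    and Q_dens: "\<forall>i\<in>{1..k}. prob_dens (q i)"
    and elbo: "\<forall>i\<in>{1..k}. elbo_ge T \<Phi> \<Gamma> y q i (\<epsilon> i)"
    and P_adm: "\<forall>i<k. admissible T \<Phi> \<Gamma> y (Suc i) (exact_post T \<Phi> \<Gamma> y (q 0) i)"
    and Q_adm: "\<forall>i\<in>{1..<k}. admissible T \<Phi> \<Gamma> y (Suc i) (q i)"
  shows
    "let r = real CARD('r);
         P = exact_post T \<Phi> \<Gamma> y (q 0);
         PM = density lborel (\<lambda>z. ennreal (P k z));
         QM = density lborel (\<lambda>z. ennreal (q k z));
         s = (\<lambda>i. sqrt (- (r / 2) * ln (2 * pi) - 1 / 2 * ln (det \<Gamma>) - \<epsilon> i));
         p = (\<lambda>j. \<Prod>i\<in>{j+1..k}. enn2real (evid T \<Phi> \<Gamma> y i (P (i - 1))));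
         zq = (\<lambda>j. \<Prod>i\<in>{j+1..k}. enn2real (evid T \<Phi> \<Gamma> y i (q (i - 1))));
         sqz = (\<lambda>j. \<Prod>i\<in>{j+1..k}. sqrt (enn2real (evid T \<Phi> \<Gamma> y i (q (i - 1)))));
         g = (\<lambda>j. (2 * pi) powr (- (r * real (k - j)) / 2) * det \<Gamma> powr (- real (k - j) / 2));
         gH = (\<lambda>j. 2 ^ (k - j) * (2 * pi) powr (- (r * real (k - j)) / 4)
                    * det \<Gamma> powr (- real (k - j) / 4))
     in (dTV PM QM \<le> (\<Sum>j=1..<k. g j / (sqrt 2 * p j) * s j) + 1 / sqrt 2 * s k
         \<and> dTV PM QM \<le> (\<Sum>j=1..<k. g j / (sqrt 2 * zq j) * s j) + 1 / sqrt 2 * s k)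
      \<and> (dH (P k) (q k) \<le> (\<Sum>j=1..<k. gH j / sqrt (2 * p j) * s j) + 1 / sqrt 2 * s k
         \<and> dH (P k) (q k) \<le> (\<Sum>j=1..<k. gH j / (sqrt 2 * sqz j) * s j) + 1 / sqrt 2 * s k)
      \<and> (\<forall>D. bdd_above (range (\<lambda>(a, b). d a b)) \<and> D = (SUP (a, b). d a b) \<longrightarrow>
           W1 d PM QM \<le> ennreal ((\<Sum>j=1..<k. D * g j / (sqrt 2 * p j) * s j) + D / sqrt 2 * s k)
         \<and> W1 d PM QM \<le> ennreal ((\<Sum>j=1..<k. D * g j / (sqrt 2 * zq j) * s j) + D / sqrt 2 * s k))"
proof -
  interpret transition_densities T using T_meas T_nonneg T_dens by unfold_locales auto
  have "det \<Gamma> \<noteq> 0"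
    using P_adm k_pos by (intro admissible_det_nonzero[of T \<Phi> \<Gamma> y 1 "q 0"]) auto
  interpret gaussian_filter T \<Phi> \<Gamma> y using \<Phi>_meas \<Gamma>_pd \<open>det \<Gamma> \<noteq> 0\<close> by unfold_locales auto
  define P where "P = exact_post T \<Phi> \<Gamma> y (q 0)"
  define s where "s j = sqrt (ln lik_max - \<epsilon> j)" for j
  obtain n where n: "k = Suc n" using k_pos by (cases k) auto
  have dens: "prob_dens (P k)" "prob_dens (q k)"
    using prob_dens_post_op[of k "P n"] P_adm Q_dens unfolding n by (auto simp: P_def)
  note bounds = exact_post_error_bounds[OF Q_dens elbo P_adm Q_adm, folded P_def, unfolded s_def[symmetric]]
  note tv = bounds(1,2)[unfolded tv_bound_closed_form[OF k_pos]]
  note hel = bounds(3)[unfolded dH_bound_closed_form(2)[OF k_pos]] bounds(4)[unfolded dH_bound_closed_form(1)[OF k_pos]]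
  note dTV = dTV_density_le_tv_dens[OF dens]
  have W1: "W1 d (density lborel (\<lambda>z. ennreal (P k z))) (density lborel (\<lambda>z. ennreal (q k z)))
      \<le> ennreal ((\<Sum>j=1..<k. D * a j / b j * s j) + D / sqrt 2 * s k)"
    if "tv_dens (P k) (q k) \<le> (\<Sum>j=1..<k. a j / b j * s j) + 1 / sqrt 2 * s k"
      and "bdd_above (range (\<lambda>(a, b). d a b))" and "D = (SUP (a, b). d a b)" for a b :: "nat \<Rightarrow> real" and D
    using W1_density_le_Sup_mult[OF d_polish that(2) dens that(1)] that(3)
    by (simp add: sum_distrib_left algebra_simps)
  show ?thesis
    unfolding Let_def P_def[symmetric] ln_lik_max[symmetric] s_def[symmetric] evidence_def[symmetric]
    using order_trans[OF dTV tv(1)] order_trans[OF dTV tv(2)] hel W1[OF tv(1)] W1[OF tv(2)] by blast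
qed

end
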